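(* Suppose there exists a subspace $\mathcal C\subseteq V$ of dimension $K$ with orthogonal projector $P$ that detects every error in $\mathcal E_\xi$ for each $\xi$ in a prescribed set $\mathcal S$ of irreducible types. Then there exist Hermitian matrices $A_\xi,B_\xi\in\mathbb C^{m_\xi\times m_\xi}$, for all types $\xi$ occurring in $\mathcal L(V)$, satisfying: $0\preceq A_\xi$ for all $\xi$; $A_\xi\preceq KB_\xi$ for all $\xi$; $\sum_\xi\mathrm{Tr}A_\xi=K$; $\sum_\xi\mathrm{Tr}B_\xi=K^2$; $\mathrm{vec}(B)=M\,\mathrm{vec}(A)$; and $A_\xi=KB_\xi$ for all $\xi\in\mathcal S$. One may take $A_\xi=A_\xi(P)$, $B_\xi=B_\xi(P)$. In particular, infeasibility of this semidefinite system certifies that no $K$-dimensional subspace of $V$ detects all errors in the sectors $\mathcal E_\xi$, $\xi\in\mathcal S$.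
   Context: Let $G$ be a group and $V$ a finite-dimensional complex Hilbert space with a unitary representation $\rho$ of $G$; $G$ acts on $\mathcal L(V)$ by conjugation, unitarily for $\langle X_1,X_2\rangle=\mathrm{Tr}(X_1^\dagger X_2)$. Let $\mathcal L(V)=\bigoplus_\xi\mathcal E_\xi$ be the isotypic decomposition, $m_\xi$ the multiplicity and $d_\xi$ the dimension of type $\xi$. Choose an orthogonal decomposition $\mathcal E_\xi=\bigoplus_{\alpha=1}^{m_\xi}\mathcal E_{\xi\alpha}$ into irreducibles, $G$-equivariant isometric isomorphisms $\phi^\xi_{1\alpha}:\mathcal E_{\xi1}\to\mathcal E_{\xi\alpha}$ ($\phi^\xi_{11}=\mathrm{id}$), an orthonormal basis $\{E_i^1\}_{i=1}^{d_\xi}$ of $\mathcal E_{\xi1}$, and put $E_i^\alpha=\phi^\xi_{1\alpha}(E_i^1)$. Projector matrix units $\Pi_{\xi\alpha\beta}(X)=\sum_i\langle E_i^\alpha,X\rangle E_i^\beta$; twirl matrix units $\mathrm{Twirl}_{\xi\alpha\beta}(X)=\sum_i(E_i^\alpha)^\dagger XE_i^\beta$. Matrix enumerators $[A_\xi(X)]_{\alpha\beta}=\langle X,\Pi_{\xi\alpha\beta}(X)\rangle$, $[B_\xi(X)]_{\alpha\beta}=\langle X,\mathrm{Twirl}_{\xi\alpha\beta}(X)\rangle$. The block MacWilliams matrix is $M_{(\xi,\alpha,\beta),(\rho,\mu,\nu)}=\frac1{d_\xi}\langle\!\langle\Pi_{\xi\alpha\beta},\mathrm{Twirl}_{\rho\mu\nu}\rangle\!\rangle$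 with $\langle\!\langle\mathcal S,\mathcal T\rangle\!\rangle=\mathrm{Tr}(\mathcal S^\dagger\mathcal T)$, and $\mathrm{vec}(B)=M\,\mathrm{vec}(A)$ means $[B_\rho]_{\mu\nu}=\sum_{\xi,\alpha,\beta}M_{(\xi,\alpha,\beta),(\rho,\mu,\nu)}[A_\xi]_{\alpha\beta}$ for all $\rho,\mu,\nu$. $\preceq$ is the Loewner order. A subspace with orthogonal projector $P$ detects every error in $\mathcal F\subseteq\mathcal L(V)$ if for every $E\in\mathcal F$ there is $c_E\in\mathbb C$ with $PEP=c_EP$. *)

theory Defs
  imports "HOL-Algebra.Group" "Jordan_Normal_Form.Matrix"
begin

definition adj :: "complex mat \<Rightarrow> complex mat" where
  "adj A = mat (dim_col A) (dim_row A) (\<lambda>(i,j). cnj (A $$ (j,i)))"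

definition mtrace :: "complex mat \<Rightarrow> complex" where
  "mtrace A = (\<Sum>i<dim_row A. A $$ (i,i))"

definition hs_inner :: "complex mat \<Rightarrow> complex mat \<Rightarrow> complex" where
  "hs_inner X Y = mtrace (adj X * Y)"

definition hermitian :: "complex mat \<Rightarrow> bool" where
  "hermitian A \<longleftrightarrow> dim_row A = dim_col A \<and> adj A = A"

definition loewner_le :: "complex mat \<Rightarrow> complex mat \<Rightarrow> bool" where
  "loewner_le A B \<longleftrightarrow> (\<exists>k. A \<in> carrier_mat k k \<and> B \<in> carrier_mat k k \<and>
     (\<forall>v \<in> carrier_vec k. Im (((B - A) *\<^sub>v v) \<bullet>c v) = 0 \<and> 0 \<le> Re (((B - A) *\<^sub>v v) \<bullet>c v)))"

definition lincomb_m :: "nat \<Rightarrow> 'i set \<Rightarrow> ('i \<Rightarrow> complex) \<Rightarrow> ('i \<Rightarrow> complex mat) \<Rightarrow> complex mat" where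
  "lincomb_m n I c F = mat n n (\<lambda>(a,b). \<Sum>i\<in>I. c i * F i $$ (a,b))"

definition span_m :: "nat \<Rightarrow> 'i set \<Rightarrow> ('i \<Rightarrow> complex mat) \<Rightarrow> complex mat set" where
  "span_m n I F = {lincomb_m n I c F | c. True}"

definition msubspace :: "nat \<Rightarrow> complex mat set \<Rightarrow> bool" where
  "msubspace n W \<longleftrightarrow> W \<subseteq> carrier_mat n n \<and> 0\<^sub>m n n \<in> W \<and>
     (\<forall>X\<in>W. \<forall>Y\<in>W. X + Y \<in> W) \<and> (\<forall>c. \<forall>X\<in>W. c \<cdot>\<^sub>m X \<in> W)"

definition unitary_rep :: "('g, 'b) monoid_scheme \<Rightarrow> nat \<Rightarrow> ('g \<Rightarrow> complex mat) \<Rightarrow> bool" where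
  "unitary_rep G n rep \<longleftrightarrow> group G \<and>
     (\<forall>g\<in>carrier G. rep g \<in> carrier_mat n n \<and> adj (rep g) * rep g = 1\<^sub>m n) \<and>
     (\<forall>g\<in>carrier G. \<forall>h\<in>carrier G. rep (g \<otimes>\<^bsub>G\<^esub> h) = rep g * rep h)"

definition conj_act :: "('g \<Rightarrow> complex mat) \<Rightarrow> 'g \<Rightarrow> complex mat \<Rightarrow> complex mat" where
  "conj_act rep g X = rep g * X * adj (rep g)"

definition invariant_sub :: "('g, 'b) monoid_scheme \<Rightarrow> ('g \<Rightarrow> complex mat) \<Rightarrow> complex mat set \<Rightarrow> bool" where
  "invariant_sub G rep W \<longleftrightarrow> (\<forall>g\<in>carrier G. \<forall>X\<in>W. conj_act rep g X \<in> W)"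

definition irreducible_sub :: "('g, 'b) monoid_scheme \<Rightarrow> nat \<Rightarrow> ('g \<Rightarrow> complex mat) \<Rightarrow> complex mat set \<Rightarrow> bool" where
  "irreducible_sub G n rep W \<longleftrightarrow> msubspace n W \<and> invariant_sub G rep W \<and> W \<noteq> {0\<^sub>m n n} \<and>
     (\<forall>W'. msubspace n W' \<and> W' \<subseteq> W \<and> invariant_sub G rep W' \<longrightarrow> W' = {0\<^sub>m n n} \<or> W' = W)"

definition equiv_iso :: "('g, 'b) monoid_scheme \<Rightarrow> ('g \<Rightarrow> complex mat) \<Rightarrow> complex mat set \<Rightarrow> complex mat set
     \<Rightarrow> (complex mat \<Rightarrow> complex mat) \<Rightarrow> bool" where
  "equiv_iso G rep W W' f \<longleftrightarrow> bij_betw f W W' \<and>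
     (\<forall>X\<in>W. \<forall>Y\<in>W. f (X + Y) = f X + f Y) \<and> (\<forall>c. \<forall>X\<in>W. f (c \<cdot>\<^sub>m X) = c \<cdot>\<^sub>m f X) \<and>
     (\<forall>g\<in>carrier G. \<forall>X\<in>W. f (conj_act rep g X) = conj_act rep g (f X))"

definition isometric_on :: "complex mat set \<Rightarrow> (complex mat \<Rightarrow> complex mat) \<Rightarrow> bool" where
  "isometric_on W f \<longleftrightarrow> (\<forall>X\<in>W. \<forall>Y\<in>W. hs_inner (f X) (f Y) = hs_inner X Y)"

text \<open>Types are indexed by the finite set Xi (the types occurring in L(V)); copies
  alpha range over 0..<m xi (copy 0 plays the role of copy 1 in the paper), basis
  indices i over 0..<d xi.  E xi alpha i is the basis element E_i^alpha of type xi.\<close>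

definition irrep_block :: "nat \<Rightarrow> ('x \<Rightarrow> nat) \<Rightarrow> ('x \<Rightarrow> nat \<Rightarrow> nat \<Rightarrow> complex mat) \<Rightarrow> 'x \<Rightarrow> nat \<Rightarrow> complex mat set" where
  "irrep_block n d E \<xi> \<alpha> = span_m n {..<d \<xi>} (E \<xi> \<alpha>)"

definition isotypic_sector :: "nat \<Rightarrow> ('x \<Rightarrow> nat) \<Rightarrow> ('x \<Rightarrow> nat) \<Rightarrow> ('x \<Rightarrow> nat \<Rightarrow> nat \<Rightarrow> complex mat) \<Rightarrow> 'x \<Rightarrow> complex mat set" where
  "isotypic_sector n m d E \<xi> = span_m n ({..<m \<xi>} \<times> {..<d \<xi>}) (\<lambda>(\<alpha>,i). E \<xi> \<alpha> i)"

definition idx :: "'x set \<Rightarrow> ('x \<Rightarrow> nat) \<Rightarrow> ('x \<Rightarrow> nat) \<Rightarrow> ('x \<times> nat \<times> nat) set" where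
  "idx Xi m d = {(\<xi>,\<alpha>,i). \<xi> \<in> Xi \<and> \<alpha> < m \<xi> \<and> i < d \<xi>}"

definition isotypic_decomposition ::
  "('g, 'b) monoid_scheme \<Rightarrow> nat \<Rightarrow> ('g \<Rightarrow> complex mat) \<Rightarrow> 'x set \<Rightarrow> ('x \<Rightarrow> nat) \<Rightarrow> ('x \<Rightarrow> nat)
     \<Rightarrow> ('x \<Rightarrow> nat \<Rightarrow> nat \<Rightarrow> complex mat) \<Rightarrow> bool" where
  "isotypic_decomposition G n rep Xi m d E \<longleftrightarrow>
     finite Xi \<and> (\<forall>\<xi>\<in>Xi. 1 \<le> m \<xi>) \<and>
     \<comment> \<open>the E_i^alpha of all types form an orthonormal basis of L(V)\<close>
     (\<forall>(\<xi>,\<alpha>,i)\<in>idx Xi m d. E \<xi> \<alpha> i \<in> carrier_mat n n) \<and>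
     (\<forall>p\<in>idx Xi m d. \<forall>q\<in>idx Xi m d.
        hs_inner ((\<lambda>(\<xi>,\<alpha>,i). E \<xi> \<alpha> i) p) ((\<lambda>(\<xi>,\<alpha>,i). E \<xi> \<alpha> i) q) = (if p = q then 1 else 0)) \<and>
     span_m n (idx Xi m d) (\<lambda>(\<xi>,\<alpha>,i). E \<xi> \<alpha> i) = carrier_mat n n \<and>
     \<comment> \<open>each E_{xi alpha} is an irreducible subrepresentation\<close>
     (\<forall>\<xi>\<in>Xi. \<forall>\<alpha><m \<xi>. irreducible_sub G n rep (irrep_block n d E \<xi> \<alpha>)) \<and>
     \<comment> \<open>E_i^alpha = phi_{1 alpha}(E_i^1), phi_{1 alpha} G-equivariant isometric isomorphism\<close>
     (\<forall>\<xi>\<in>Xi. \<forall>\<alpha><m \<xi>. \<exists>\<phi>. equiv_iso G rep (irrep_block n d E \<xi> 0) (irrep_block n d E \<xi> \<alpha>) \<phi> \<and>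
         isometric_on (irrep_block n d E \<xi> 0) \<phi> \<and> (\<forall>i<d \<xi>. \<phi> (E \<xi> 0 i) = E \<xi> \<alpha> i)) \<and>
     \<comment> \<open>distinct types are non-isomorphic (so the sectors are the isotypic components)\<close>
     (\<forall>\<xi>\<in>Xi. \<forall>\<eta>\<in>Xi. \<xi> \<noteq> \<eta> \<longrightarrow>
         \<not> (\<exists>f. equiv_iso G rep (irrep_block n d E \<xi> 0) (irrep_block n d E \<eta> 0) f))"

definition Pi_unit :: "nat \<Rightarrow> ('x \<Rightarrow> nat) \<Rightarrow> ('x \<Rightarrow> nat \<Rightarrow> nat \<Rightarrow> complex mat) \<Rightarrow> 'x \<Rightarrow> nat \<Rightarrow> nat \<Rightarrow> complex mat \<Rightarrow> complex mat" where
  "Pi_unit n d E \<xi> \<alpha> \<beta> X = lincomb_m n {..<d \<xi>} (\<lambda>i. hs_inner (E \<xi> \<alpha> i) X) (E \<xi> \<beta>)"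

definition Twirl_unit :: "nat \<Rightarrow> ('x \<Rightarrow> nat) \<Rightarrow> ('x \<Rightarrow> nat \<Rightarrow> nat \<Rightarrow> complex mat) \<Rightarrow> 'x \<Rightarrow> nat \<Rightarrow> nat \<Rightarrow> complex mat \<Rightarrow> complex mat" where
  "Twirl_unit n d E \<xi> \<alpha> \<beta> X = lincomb_m n {..<d \<xi>} (\<lambda>i. 1) (\<lambda>i. adj (E \<xi> \<alpha> i) * X * E \<xi> \<beta> i)"

definition A_enum :: "nat \<Rightarrow> ('x \<Rightarrow> nat) \<Rightarrow> ('x \<Rightarrow> nat) \<Rightarrow> ('x \<Rightarrow> nat \<Rightarrow> nat \<Rightarrow> complex mat) \<Rightarrow> complex mat \<Rightarrow> 'x \<Rightarrow> complex mat" where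
  "A_enum n m d E X \<xi> = mat (m \<xi>) (m \<xi>) (\<lambda>(\<alpha>,\<beta>). hs_inner X (Pi_unit n d E \<xi> \<alpha> \<beta> X))"

definition B_enum :: "nat \<Rightarrow> ('x \<Rightarrow> nat) \<Rightarrow> ('x \<Rightarrow> nat) \<Rightarrow> ('x \<Rightarrow> nat \<Rightarrow> nat \<Rightarrow> complex mat) \<Rightarrow> complex mat \<Rightarrow> 'x \<Rightarrow> complex mat" where
  "B_enum n m d E X \<xi> = mat (m \<xi>) (m \<xi>) (\<lambda>(\<alpha>,\<beta>). hs_inner X (Twirl_unit n d E \<xi> \<alpha> \<beta> X))"

definition mat_unit :: "nat \<Rightarrow> nat \<Rightarrow> nat \<Rightarrow> complex mat" where
  "mat_unit n a b = mat n n (\<lambda>(i,j). if i = a \<and> j = b then 1 else 0)"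

text \<open><<S,T>> = Tr(S^dagger T) for superoperators on L(V), computed in the orthonormal
  basis of matrix units: Tr(S^dagger T) = sum_k <S B_k, T B_k>.\<close>
definition super_inner :: "nat \<Rightarrow> (complex mat \<Rightarrow> complex mat) \<Rightarrow> (complex mat \<Rightarrow> complex mat) \<Rightarrow> complex" where
  "super_inner n S T = (\<Sum>a<n. \<Sum>b<n. hs_inner (S (mat_unit n a b)) (T (mat_unit n a b)))"

definition MacW :: "nat \<Rightarrow> ('x \<Rightarrow> nat) \<Rightarrow> ('x \<Rightarrow> nat \<Rightarrow> nat \<Rightarrow> complex mat) \<Rightarrow> ('x \<times> nat \<times> nat) \<Rightarrow> ('x \<times> nat \<times> nat) \<Rightarrow> complex" where
  "MacW n d E p q = (case p of (\<xi>,\<alpha>,\<beta>) \<Rightarrow> case q of (\<rho>,\<mu>,\<nu>) \<Rightarrow>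
      (1 / of_nat (d \<xi>)) * super_inner n (Pi_unit n d E \<xi> \<alpha> \<beta>) (Twirl_unit n d E \<rho> \<mu> \<nu>))"

definition mw_feasible :: "nat \<Rightarrow> 'x set \<Rightarrow> ('x \<Rightarrow> nat) \<Rightarrow> ('x \<Rightarrow> nat) \<Rightarrow> ('x \<Rightarrow> nat \<Rightarrow> nat \<Rightarrow> complex mat)
    \<Rightarrow> 'x set \<Rightarrow> nat \<Rightarrow> ('x \<Rightarrow> complex mat) \<Rightarrow> ('x \<Rightarrow> complex mat) \<Rightarrow> bool" where
  "mw_feasible n Xi m d E S K A B \<longleftrightarrow>
     (\<forall>\<xi>\<in>Xi. A \<xi> \<in> carrier_mat (m \<xi>) (m \<xi>) \<and> B \<xi> \<in> carrier_mat (m \<xi>) (m \<xi>) \<and>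
              hermitian (A \<xi>) \<and> hermitian (B \<xi>)) \<and>
     (\<forall>\<xi>\<in>Xi. loewner_le (0\<^sub>m (m \<xi>) (m \<xi>)) (A \<xi>)) \<and>
     (\<forall>\<xi>\<in>Xi. loewner_le (A \<xi>) (of_nat K \<cdot>\<^sub>m B \<xi>)) \<and>
     (\<Sum>\<xi>\<in>Xi. mtrace (A \<xi>)) = of_nat K \<and>
     (\<Sum>\<xi>\<in>Xi. mtrace (B \<xi>)) = of_nat K ^ 2 \<and>
     (\<forall>\<rho>\<in>Xi. \<forall>\<mu><m \<rho>. \<forall>\<nu><m \<rho>.
        B \<rho> $$ (\<mu>,\<nu>) = (\<Sum>\<xi>\<in>Xi. \<Sum>\<alpha><m \<xi>. \<Sum>\<beta><m \<xi>. MacW n d E (\<xi>,\<alpha>,\<beta>) (\<rho>,\<mu>,\<nu>) * A \<xi> $$ (\<alpha>,\<beta>))) \<and>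
     (\<forall>\<xi>\<in>S. A \<xi> = of_nat K \<cdot>\<^sub>m B \<xi>)"

text \<open>A K-dimensional subspace C of V = C^n, given by an orthonormal basis c_0..c_{K-1};
  its orthogonal projector is P = sum_k c_k c_k^dagger.\<close>
definition orthonormal_family :: "nat \<Rightarrow> nat \<Rightarrow> (nat \<Rightarrow> complex vec) \<Rightarrow> bool" where
  "orthonormal_family n K c \<longleftrightarrow> (\<forall>k<K. c k \<in> carrier_vec n) \<and>
     (\<forall>k<K. \<forall>l<K. c k \<bullet>c c l = (if k = l then 1 else 0))"

definition proj_of :: "nat \<Rightarrow> nat \<Rightarrow> (nat \<Rightarrow> complex vec) \<Rightarrow> complex mat" where
  "proj_of n K c = mat n n (\<lambda>(a,b). \<Sum>k<K. c k $ a * cnj (c k $ b))"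

definition detects :: "complex mat \<Rightarrow> complex mat set \<Rightarrow> bool" where
  "detects P F \<longleftrightarrow> (\<forall>X\<in>F. \<exists>c::complex. P * X * P = c \<cdot>\<^sub>m P)"

end

theory Submission
  imports Defs "Jordan_Normal_Form.Spectral_Radius" "HOL-Analysis.Convex"
begin

(*
  In the basis E the enumerators of the code projector P read
  [A_xi]_ab = sum_i <E^a_i, P> cnj <E^b_i, P> and [B_xi]_ab = sum_i <P, (E^a_i)^+ P E^b_i>.
  At a vector v their quadratic forms are sum_i |<P, F_i>|^2 and sum_i <P, F_i^+ P F_i> with
  F_i = sum_b v_b E^b_i, so A_xi is positive semidefinite, and Cauchy-Schwarz for P and P F_i P
  gives A_xi <= K B_xi.  Parseval in the orthonormal basis E gives sum_xi Tr A_xi = <P, P> = K,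
  and the completeness relation sum_p E_p^+ Y E_p = Tr(Y) 1 gives sum_xi Tr B_xi = <P, K 1> = K^2.
  If P detects the sector of xi, every P E^a_i P is a multiple of P, and A_xi = K B_xi becomes an
  identity between sums of products of these scalars.

  The MacWilliams identity B = M A holds for every operator X.  The twirl unit T commutes with the
  conjugation action, so by Schur's lemma its matrix in the basis E is diagonal with entries
  depending only on the type and the copies, <E^b_i', T E^a_i> = [xi' = xi, i' = i] lambda; averaging
  the diagonal identifies lambda with (1/d_xi) <<Pi_xi_a_b, T>>, the MacWilliams coefficient.
  Expanding <X, T X> in the basis E then gives [B_rho]_mu_nu = sum M [A_xi]_a_b.
*)

section \<open>Matrices and the Hilbert--Schmidt inner product\<close>

lemma if_one_zero_mult [simp]: "(if P then 1 else 0) * (x :: 'a :: semiring_1) = (if P then x else 0)"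
  by simp

lemma mult_if_one_zero [simp]: "(x :: 'a :: semiring_1) * (if P then 1 else 0) = (if P then x else 0)"
  by simp

lemma adj_carrier [simp]: "A \<in> carrier_mat n m \<Longrightarrow> adj A \<in> carrier_mat m n"
  by (simp add: adj_def)

lemma dim_adj [simp]: "dim_row (adj A) = dim_col A" "dim_col (adj A) = dim_row A"
  by (simp_all add: adj_def)

lemma index_adj [simp]: "i < dim_col A \<Longrightarrow> j < dim_row A \<Longrightarrow> adj A $$ (i,j) = cnj (A $$ (j,i))"
  by (simp add: adj_def)

lemma index_adj_square: "A \<in> carrier_mat n n \<Longrightarrow> i < n \<Longrightarrow> j < n \<Longrightarrow> adj A $$ (i,j) = cnj (A $$ (j,i))"
  by simp

lemma adj_adj [simp]: "adj (adj A) = A"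
  by (rule eq_matI) auto

lemma adj_mult:
  assumes "A \<in> carrier_mat n k" "B \<in> carrier_mat k m"
  shows "adj (A * B) = adj B * adj A"
  using assms by (intro eq_matI) (auto simp: scalar_prod_def mult.commute)

lemma mult_carrier_square [simp]:
  "(A :: 'a :: semiring_0 mat) \<in> carrier_mat n n \<Longrightarrow> B \<in> carrier_mat n n \<Longrightarrow> A * B \<in> carrier_mat n n"
  by simp

lemma index_mult_mat_square:
  assumes "A \<in> carrier_mat n n" "B \<in> carrier_mat n n" "a < n" "b < n"
  shows "(A * B) $$ (a,b) = (\<Sum>k<n. A $$ (a,k) * B $$ (k,b))"
  using assms by (auto simp: scalar_prod_def atLeast0LessThan)

lemma index_mult_mat_square3:
  assumes "A \<in> carrier_mat n n" "B \<in> carrier_mat n n" "C \<in> carrier_mat n n" "a < n" "b < n"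
  shows "(A * B * C) $$ (a,b) = (\<Sum>k<n. \<Sum>l<n. A $$ (a,k) * B $$ (k,l) * C $$ (l,b))"
  using assms by (auto simp: scalar_prod_def atLeast0LessThan sum_distrib_left sum_distrib_right
      mult_ac intro: sum.swap)

lemma mtrace_mult_commute:
  assumes "A \<in> carrier_mat n n" "B \<in> carrier_mat n n"
  shows "mtrace (A * B) = mtrace (B * A)"
proof -
  have "mtrace (A * B) = (\<Sum>i<n. \<Sum>k<n. A $$ (i,k) * B $$ (k,i))"
    using assms by (auto simp: mtrace_def scalar_prod_def atLeast0LessThan intro!: sum.cong)
  also have "\<dots> = (\<Sum>k<n. \<Sum>i<n. B $$ (k,i) * A $$ (i,k))"
    by (subst sum.swap) (simp add: mult.commute)
  also have "\<dots> = mtrace (B * A)"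
    using assms by (auto simp: mtrace_def scalar_prod_def atLeast0LessThan intro!: sum.cong)
  finally show ?thesis .
qed

abbreviation mat_indices :: "nat \<Rightarrow> (nat \<times> nat) set" where
  "mat_indices n \<equiv> {..<n} \<times> {..<n}"

lemma hs_inner_eq_sum_entries:
  assumes "X \<in> carrier_mat n n" "Y \<in> carrier_mat n n"
  shows "hs_inner X Y = (\<Sum>q\<in>mat_indices n. cnj (X $$ q) * Y $$ q)"
proof -
  have "hs_inner X Y = (\<Sum>i<n. \<Sum>k<n. cnj (X $$ (k,i)) * Y $$ (k,i))"
    using assms unfolding hs_inner_def mtrace_def adj_def
    by (auto simp: scalar_prod_def atLeast0LessThan intro!: sum.cong)
  also have "\<dots> = (\<Sum>k<n. \<Sum>i<n. cnj (X $$ (k,i)) * Y $$ (k,i))"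
    by (rule sum.swap)
  finally show ?thesis
    by (simp add: sum.cartesian_product)
qed

lemma hs_inner_swap:
  assumes "X \<in> carrier_mat n n" "Y \<in> carrier_mat n n"
  shows "hs_inner Y X = cnj (hs_inner X Y)"
  using assms by (simp add: hs_inner_eq_sum_entries mult.commute)

lemma mtrace_smult: "A \<in> carrier_mat k k \<Longrightarrow> mtrace (a \<cdot>\<^sub>m A) = a * mtrace A"
  unfolding mtrace_def sum_distrib_left by (intro sum.cong) auto

lemma hs_inner_smult_right:
  assumes "X \<in> carrier_mat n n" "Y \<in> carrier_mat n n"
  shows "hs_inner X (b \<cdot>\<^sub>m Y) = b * hs_inner X Y"
proof -
  have "adj X * (b \<cdot>\<^sub>m Y) = b \<cdot>\<^sub>m (adj X * Y)"
    using assms by (intro mult_smult_distrib[of _ n n _ n]) auto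
  thus ?thesis
    using assms by (simp add: hs_inner_def mtrace_smult[of _ n])
qed

lemma hs_inner_smult_left:
  assumes "X \<in> carrier_mat n n" "Y \<in> carrier_mat n n"
  shows "hs_inner (a \<cdot>\<^sub>m X) Y = cnj a * hs_inner X Y"
  using assms by (simp add: hs_inner_swap[of Y n] hs_inner_smult_right)

lemma hs_inner_self:
  assumes "X \<in> carrier_mat n n"
  shows "hs_inner X X = of_real (\<Sum>q\<in>mat_indices n. (cmod (X $$ q))\<^sup>2)"
  using assms
  by (simp add: hs_inner_eq_sum_entries complex_norm_square mult.commute del: of_real_power)

lemma hs_inner_Cauchy_Schwarz:
  assumes "X \<in> carrier_mat n n" "Y \<in> carrier_mat n n"
  shows "(cmod (hs_inner X Y))\<^sup>2 \<le> Re (hs_inner X X) * Re (hs_inner Y Y)"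
proof -
  let ?I = "mat_indices n"
  have "cmod (hs_inner X Y) \<le> (\<Sum>q\<in>?I. cmod (X $$ q) * cmod (Y $$ q))"
    unfolding hs_inner_eq_sum_entries[OF assms]
    by (rule order.trans[OF norm_sum]) (simp add: norm_mult)
  hence "(cmod (hs_inner X Y))\<^sup>2 \<le> (\<Sum>q\<in>?I. cmod (X $$ q) * cmod (Y $$ q))\<^sup>2"
    by (simp add: power_mono)
  also have "\<dots> \<le> (\<Sum>q\<in>?I. (cmod (X $$ q))\<^sup>2) * (\<Sum>q\<in>?I. (cmod (Y $$ q))\<^sup>2)"
    by (rule Cauchy_Schwarz_ineq_sum)
  finally show ?thesis
    using assms by (simp add: hs_inner_self)
qed

lemma cscalar_prod_mult_mat_vec:
  assumes "(M :: complex mat) \<in> carrier_mat k k" "v \<in> carrier_vec k"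
  shows "(M *\<^sub>v v) \<bullet>c v = (\<Sum>\<alpha><k. \<Sum>\<beta><k. M $$ (\<alpha>,\<beta>) * v $ \<beta> * cnj (v $ \<alpha>))"
  using assms by (auto simp: scalar_prod_def atLeast0LessThan sum_distrib_right intro!: sum.cong)

lemma smult_mult_mat_vec:
  assumes "(A :: 'a :: comm_semiring_0 mat) \<in> carrier_mat nr nc" "v \<in> carrier_vec nc"
  shows "(a \<cdot>\<^sub>m A) *\<^sub>v v = a \<cdot>\<^sub>v (A *\<^sub>v v)"
  using assms by (intro eq_vecI) (auto simp: scalar_prod_def sum_distrib_left mult.assoc)

lemma zero_mat_if_mult_mat_vec_zero:
  assumes "(F :: 'a :: comm_ring_1 mat) \<in> carrier_mat a b" "\<And>v. v \<in> carrier_vec b \<Longrightarrow> F *\<^sub>v v = 0\<^sub>v a"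
  shows "F = 0\<^sub>m a b"
proof (rule eq_matI)
  fix i j
  assume ij: "i < dim_row (0\<^sub>m a b :: 'a mat)" "j < dim_col (0\<^sub>m a b :: 'a mat)"
  have "F $$ (i,j) = (F *\<^sub>v unit_vec b j) $ i"
    using assms(1) ij by auto
  thus "F $$ (i,j) = 0\<^sub>m a b $$ (i,j)"
    using assms(2)[of "unit_vec b j"] ij by simp
qed (use assms in auto)

lemma loewner_leI:
  assumes "A \<in> carrier_mat k k" "B \<in> carrier_mat k k"
    and "\<And>v. v \<in> carrier_vec k \<Longrightarrow>
           Im ((B *\<^sub>v v) \<bullet>c v - (A *\<^sub>v v) \<bullet>c v) = 0 \<and> 0 \<le> Re ((B *\<^sub>v v) \<bullet>c v - (A *\<^sub>v v) \<bullet>c v)"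
  shows "loewner_le A B"
  unfolding loewner_le_def
proof (intro exI[of _ k] conjI ballI)
  fix v :: "complex vec"
  assume v: "v \<in> carrier_vec k"
  have "((B - A) *\<^sub>v v) \<bullet>c v = (B *\<^sub>v v) \<bullet>c v - (A *\<^sub>v v) \<bullet>c v"
    using assms(1,2) v
    by (simp add: minus_mult_distrib_mat_vec minus_scalar_prod_distrib[of _ k])
  thus "Im (((B - A) *\<^sub>v v) \<bullet>c v) = 0" "0 \<le> Re (((B - A) *\<^sub>v v) \<bullet>c v)"
    using assms(3)[OF v] by simp_all
qed (use assms in auto)

section \<open>Linear combinations and orthonormal bases of matrices\<close>

lemma lincomb_m_carrier [simp]: "lincomb_m n I c F \<in> carrier_mat n n"
  by (simp add: lincomb_m_def)

lemma dim_lincomb_m [simp]: "dim_row (lincomb_m n I c F) = n" "dim_col (lincomb_m n I c F) = n"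
  by (simp_all add: lincomb_m_def)

lemma index_lincomb_m:
  "a < n \<Longrightarrow> b < n \<Longrightarrow> lincomb_m n I c F $$ (a,b) = (\<Sum>i\<in>I. c i * F i $$ (a,b))"
  by (simp add: lincomb_m_def)

lemma lincomb_m_cong:
  assumes "\<And>i. i \<in> I \<Longrightarrow> c i = c' i" "\<And>i. i \<in> I \<Longrightarrow> F i = F' i"
  shows "lincomb_m n I c F = lincomb_m n I c' F'"
  using assms by (intro eq_matI) (auto simp: index_lincomb_m intro!: sum.cong)

lemma lincomb_m_zero: "lincomb_m n I (\<lambda>i. 0) F = 0\<^sub>m n n"
  by (intro eq_matI) (auto simp: index_lincomb_m)

lemma lincomb_m_indicator:
  assumes "finite I" "k \<in> I" "F k \<in> carrier_mat n n"
  shows "lincomb_m n I (\<lambda>j. if j = k then 1 else 0) F = F k"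
  using assms by (intro eq_matI) (auto simp: index_lincomb_m)

lemma add_lincomb_m: "lincomb_m n I c F + lincomb_m n I c' F = lincomb_m n I (\<lambda>i. c i + c' i) F"
  by (intro eq_matI) (auto simp: index_lincomb_m sum.distrib distrib_right)

lemma smult_lincomb_m: "a \<cdot>\<^sub>m lincomb_m n I c F = lincomb_m n I (\<lambda>i. a * c i) F"
  by (intro eq_matI) (auto simp: index_lincomb_m sum_distrib_left mult_ac)

lemma lincomb_m_lincomb_m:
  assumes "finite I" "finite J"
  shows "lincomb_m n I c (\<lambda>i. lincomb_m n J (b i) H) = lincomb_m n J (\<lambda>j. \<Sum>i\<in>I. c i * b i j) H"
  using assms by (intro eq_matI)
    (auto simp: index_lincomb_m sum_distrib_left sum_distrib_right sum.swap[of _ I] mult_ac)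

lemma lincomb_m_swap:
  assumes "finite I" "finite K"
  shows "lincomb_m n K a (\<lambda>k. lincomb_m n I c (H k)) = lincomb_m n I c (\<lambda>i. lincomb_m n K a (\<lambda>k. H k i))"
  using assms by (intro eq_matI) (auto simp: index_lincomb_m sum_distrib_left sum.swap[of _ I] mult_ac)

lemma hs_inner_lincomb_m_right:
  assumes "X \<in> carrier_mat n n" "finite I" "\<And>i. i \<in> I \<Longrightarrow> F i \<in> carrier_mat n n"
  shows "hs_inner X (lincomb_m n I c F) = (\<Sum>i\<in>I. c i * hs_inner X (F i))"
proof -
  have "hs_inner X (lincomb_m n I c F)
      = (\<Sum>q\<in>mat_indices n. cnj (X $$ q) * (\<Sum>i\<in>I. c i * F i $$ q))"
    using assms by (auto simp: hs_inner_eq_sum_entries index_lincomb_m intro!: sum.cong)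
  also have "\<dots> = (\<Sum>i\<in>I. \<Sum>q\<in>mat_indices n. c i * (cnj (X $$ q) * F i $$ q))"
    by (simp add: sum_distrib_left sum.swap[of _ I] mult_ac)
  also have "\<dots> = (\<Sum>i\<in>I. c i * hs_inner X (F i))"
    using assms by (simp add: hs_inner_eq_sum_entries sum_distrib_left)
  finally show ?thesis .
qed

lemma hs_inner_lincomb_m_left:
  assumes "X \<in> carrier_mat n n" "finite I" "\<And>i. i \<in> I \<Longrightarrow> F i \<in> carrier_mat n n"
  shows "hs_inner (lincomb_m n I c F) X = (\<Sum>i\<in>I. cnj (c i) * hs_inner (F i) X)"
  using assms by (simp add: hs_inner_swap[of X n] hs_inner_lincomb_m_right)

lemma mult_lincomb_m_left:
  assumes "M \<in> carrier_mat n n" "finite I" "\<And>i. i \<in> I \<Longrightarrow> F i \<in> carrier_mat n n"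
  shows "M * lincomb_m n I c F = lincomb_m n I c (\<lambda>i. M * F i)"
proof (rule eq_matI)
  fix a b
  assume "a < dim_row (lincomb_m n I c (\<lambda>i. M * F i))" "b < dim_col (lincomb_m n I c (\<lambda>i. M * F i))"
  hence ab: "a < n" "b < n"
    by auto
  have "(M * lincomb_m n I c F) $$ (a,b) = (\<Sum>k<n. M $$ (a,k) * (\<Sum>i\<in>I. c i * F i $$ (k,b)))"
    using assms ab by (simp add: index_mult_mat_square index_lincomb_m del: index_mult_mat)
  also have "\<dots> = (\<Sum>i\<in>I. c i * (\<Sum>k<n. M $$ (a,k) * F i $$ (k,b)))"
    by (simp add: sum_distrib_left sum.swap[of _ I] mult_ac)
  also have "\<dots> = lincomb_m n I c (\<lambda>i. M * F i) $$ (a,b)"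
    using assms ab by (auto simp: index_mult_mat_square index_lincomb_m intro!: sum.cong)
  finally show "(M * lincomb_m n I c F) $$ (a,b) = lincomb_m n I c (\<lambda>i. M * F i) $$ (a,b)" .
qed (use assms in auto)

lemma mult_lincomb_m_right:
  assumes "M \<in> carrier_mat n n" "finite I" "\<And>i. i \<in> I \<Longrightarrow> F i \<in> carrier_mat n n"
  shows "lincomb_m n I c F * M = lincomb_m n I c (\<lambda>i. F i * M)"
proof (rule eq_matI)
  fix a b
  assume "a < dim_row (lincomb_m n I c (\<lambda>i. F i * M))" "b < dim_col (lincomb_m n I c (\<lambda>i. F i * M))"
  hence ab: "a < n" "b < n"
    by auto
  have "(lincomb_m n I c F * M) $$ (a,b) = (\<Sum>k<n. (\<Sum>i\<in>I. c i * F i $$ (a,k)) * M $$ (k,b))"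
    using assms ab by (subst index_mult_mat_square[OF lincomb_m_carrier assms(1) ab])
      (auto simp: index_lincomb_m intro!: sum.cong)
  also have "\<dots> = (\<Sum>i\<in>I. c i * (\<Sum>k<n. F i $$ (a,k) * M $$ (k,b)))"
    by (simp add: sum_distrib_left sum_distrib_right sum.swap[of _ I] mult_ac)
  also have "\<dots> = lincomb_m n I c (\<lambda>i. F i * M) $$ (a,b)"
    using assms ab by (simp only: index_lincomb_m[OF ab])
      (intro sum.cong refl, simp add: index_mult_mat_square[OF assms(3) assms(1) ab])
  finally show "(lincomb_m n I c F * M) $$ (a,b) = lincomb_m n I c (\<lambda>i. F i * M) $$ (a,b)" .
qed (use assms in auto)

lemma adj_lincomb_m:
  assumes "\<And>i. i \<in> I \<Longrightarrow> F i \<in> carrier_mat n n"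
  shows "adj (lincomb_m n I c F) = lincomb_m n I (\<lambda>i. cnj (c i)) (\<lambda>i. adj (F i))"
proof (rule eq_matI)
  fix i j
  assume "i < dim_row (lincomb_m n I (\<lambda>i. cnj (c i)) (\<lambda>i. adj (F i)))"
    "j < dim_col (lincomb_m n I (\<lambda>i. cnj (c i)) (\<lambda>i. adj (F i)))"
  hence ij: "i < n" "j < n"
    by auto
  have "adj (lincomb_m n I c F) $$ (i,j) = cnj (\<Sum>x\<in>I. c x * F x $$ (j,i))"
    using ij by (simp add: index_lincomb_m)
  also have "\<dots> = (\<Sum>x\<in>I. cnj (c x) * adj (F x) $$ (i,j))"
    using assms ij by (simp only: cnj_sum) (intro sum.cong refl, simp add: index_adj_square[OF assms])
  also have "\<dots> = lincomb_m n I (\<lambda>i. cnj (c i)) (\<lambda>i. adj (F i)) $$ (i,j)"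
    using ij by (simp add: index_lincomb_m)
  finally show "adj (lincomb_m n I c F) $$ (i,j) = lincomb_m n I (\<lambda>i. cnj (c i)) (\<lambda>i. adj (F i)) $$ (i,j)" .
qed auto

lemma sandwich_lincomb_m:
  assumes "finite I" "finite J" "\<And>i. i \<in> I \<Longrightarrow> F i \<in> carrier_mat n n"
    and "\<And>j. j \<in> J \<Longrightarrow> H j \<in> carrier_mat n n" "M \<in> carrier_mat n n"
  shows "adj (lincomb_m n I a F) * M * lincomb_m n J b H
    = lincomb_m n I (\<lambda>i. cnj (a i)) (\<lambda>i. lincomb_m n J b (\<lambda>j. adj (F i) * M * H j))"
proof -
  have "adj (lincomb_m n I a F) * M = lincomb_m n I (\<lambda>i. cnj (a i)) (\<lambda>i. adj (F i) * M)"
    using assms by (simp add: adj_lincomb_m mult_lincomb_m_right)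
  hence "adj (lincomb_m n I a F) * M * lincomb_m n J b H
      = lincomb_m n I (\<lambda>i. cnj (a i)) (\<lambda>i. adj (F i) * M) * lincomb_m n J b H"
    by simp
  also have "\<dots> = lincomb_m n I (\<lambda>i. cnj (a i)) (\<lambda>i. adj (F i) * M * lincomb_m n J b H)"
    by (rule mult_lincomb_m_right) (use assms in auto)
  also have "\<dots> = lincomb_m n I (\<lambda>i. cnj (a i)) (\<lambda>i. lincomb_m n J b (\<lambda>j. adj (F i) * M * H j))"
    by (intro lincomb_m_cong refl mult_lincomb_m_left) (use assms in auto)
  finally show ?thesis .
qed

text \<open>A change of orthonormal frame by a unitary matrix leaves \<open>\<Sum>\<^sub>k H k k\<close> unchanged.\<close>
lemma lincomb_m_unitary_frame:
  assumes "finite I" "finite K"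
    and unitary: "\<And>k l. k \<in> K \<Longrightarrow> l \<in> K \<Longrightarrow> (\<Sum>i\<in>I. a i k * b i l) = (if k = l then 1 else 0)"
  shows "lincomb_m n I (\<lambda>i. 1) (\<lambda>i. lincomb_m n K (a i) (\<lambda>k. lincomb_m n K (b i) (H k)))
       = lincomb_m n K (\<lambda>k. 1) (\<lambda>k. H k k)"
proof (rule eq_matI)
  fix x y
  assume "x < dim_row (lincomb_m n K (\<lambda>k. 1) (\<lambda>k. H k k))" "y < dim_col (lincomb_m n K (\<lambda>k. 1) (\<lambda>k. H k k))"
  hence xy: "x < n" "y < n"
    by auto
  have "lincomb_m n I (\<lambda>i. 1) (\<lambda>i. lincomb_m n K (a i) (\<lambda>k. lincomb_m n K (b i) (H k))) $$ (x,y)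
      = (\<Sum>i\<in>I. \<Sum>k\<in>K. \<Sum>l\<in>K. a i k * b i l * H k l $$ (x,y))"
    using xy by (simp add: index_lincomb_m sum_distrib_left mult_ac)
  also have "\<dots> = (\<Sum>k\<in>K. \<Sum>l\<in>K. \<Sum>i\<in>I. a i k * b i l * H k l $$ (x,y))"
    by (subst sum.swap) (simp add: sum.swap[of _ I])
  also have "\<dots> = (\<Sum>k\<in>K. \<Sum>l\<in>K. (\<Sum>i\<in>I. a i k * b i l) * H k l $$ (x,y))"
    by (simp add: sum_distrib_right)
  also have "\<dots> = (\<Sum>k\<in>K. \<Sum>l\<in>K. if k = l then H k l $$ (x,y) else 0)"
    by (intro sum.cong refl) (simp add: unitary)
  also have "\<dots> = lincomb_m n K (\<lambda>k. 1) (\<lambda>k. H k k) $$ (x,y)"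
    using xy assms by (simp add: index_lincomb_m)
  finally show "lincomb_m n I (\<lambda>i. 1) (\<lambda>i. lincomb_m n K (a i) (\<lambda>k. lincomb_m n K (b i) (H k))) $$ (x,y)
      = lincomb_m n K (\<lambda>k. 1) (\<lambda>k. H k k) $$ (x,y)" .
qed auto

definition hs_orthonormal :: "nat \<Rightarrow> 'i set \<Rightarrow> ('i \<Rightarrow> complex mat) \<Rightarrow> bool" where
  "hs_orthonormal n I F \<longleftrightarrow> finite I \<and> (\<forall>i\<in>I. F i \<in> carrier_mat n n) \<and>
     (\<forall>i\<in>I. \<forall>j\<in>I. hs_inner (F i) (F j) = (if i = j then 1 else 0))"

definition hs_orthonormal_basis :: "nat \<Rightarrow> 'i set \<Rightarrow> ('i \<Rightarrow> complex mat) \<Rightarrow> bool" where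
  "hs_orthonormal_basis n I F \<longleftrightarrow> hs_orthonormal n I F \<and> span_m n I F = carrier_mat n n"

lemma hs_inner_lincomb_m_orthonormal:
  assumes "hs_orthonormal n I F" "k \<in> I"
  shows "hs_inner (F k) (lincomb_m n I c F) = c k"
proof -
  have "hs_inner (F k) (lincomb_m n I c F) = (\<Sum>i\<in>I. c i * (if k = i then 1 else 0))"
    using assms unfolding hs_orthonormal_def by (simp add: hs_inner_lincomb_m_right)
  also have "\<dots> = c k"
    using assms unfolding hs_orthonormal_def by (simp add: if_distrib cong: if_cong)
  finally show ?thesis .
qed

lemma hs_inner_lincomb_m_lincomb_m_orthonormal:
  assumes "hs_orthonormal n I F"
  shows "hs_inner (lincomb_m n I c F) (lincomb_m n I c' F) = (\<Sum>i\<in>I. cnj (c i) * c' i)"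
  using assms unfolding hs_orthonormal_def
  by (simp add: hs_inner_lincomb_m_left hs_inner_lincomb_m_orthonormal[OF assms])

lemma lincomb_m_orthonormal_coeffs:
  assumes "hs_orthonormal n I F" "X = lincomb_m n I c F"
  shows "X = lincomb_m n I (\<lambda>i. hs_inner (F i) X) F"
  using assms by (auto simp: hs_inner_lincomb_m_orthonormal intro!: lincomb_m_cong)

lemma orthonormal_basis_expansion:
  assumes "hs_orthonormal_basis n I F" "X \<in> carrier_mat n n"
  shows "X = lincomb_m n I (\<lambda>i. hs_inner (F i) X) F"
proof -
  obtain c where "X = lincomb_m n I c F"
    using assms unfolding hs_orthonormal_basis_def span_m_def by auto
  thus ?thesis
    using assms(1) lincomb_m_orthonormal_coeffs unfolding hs_orthonormal_basis_def by blast
qed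

lemma orthonormal_basis_Parseval:
  assumes "hs_orthonormal_basis n I F" "X \<in> carrier_mat n n"
  shows "(\<Sum>i\<in>I. cnj (hs_inner (F i) X) * hs_inner (F i) X) = hs_inner X X"
proof -
  have "hs_orthonormal n I F"
    using assms(1) unfolding hs_orthonormal_basis_def ..
  hence "hs_inner (lincomb_m n I (\<lambda>i. hs_inner (F i) X) F) (lincomb_m n I (\<lambda>i. hs_inner (F i) X) F)
      = (\<Sum>i\<in>I. cnj (hs_inner (F i) X) * hs_inner (F i) X)"
    by (rule hs_inner_lincomb_m_lincomb_m_orthonormal)
  thus ?thesis
    by (simp only: orthonormal_basis_expansion[OF assms, symmetric])
qed

lemma mat_unit_carrier [simp]: "mat_unit n a b \<in> carrier_mat n n"
  by (simp add: mat_unit_def)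

lemma hs_inner_mat_unit:
  assumes "(a,b) \<in> mat_indices n" "Y \<in> carrier_mat n n"
  shows "hs_inner (mat_unit n a b) Y = Y $$ (a,b)"
proof -
  have "hs_inner (mat_unit n a b) Y = (\<Sum>q\<in>mat_indices n. cnj (mat_unit n a b $$ q) * Y $$ q)"
    using assms(2) by (simp add: hs_inner_eq_sum_entries)
  also have "\<dots> = (\<Sum>q\<in>mat_indices n. if q = (a,b) then Y $$ q else 0)"
  proof (rule sum.cong[OF refl])
    fix q
    assume "q \<in> mat_indices n"
    thus "cnj (mat_unit n a b $$ q) * Y $$ q = (if q = (a,b) then Y $$ q else 0)"
      by (cases q) (auto simp: mat_unit_def)
  qed
  finally show ?thesis
    using assms by simp
qed

lemma mat_unit_expansion:
  assumes "Y \<in> carrier_mat n n"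
  shows "Y = lincomb_m n (mat_indices n) (\<lambda>q. Y $$ q) (\<lambda>q. mat_unit n (fst q) (snd q))"
proof (rule eq_matI)
  fix i j
  assume "i < dim_row (lincomb_m n (mat_indices n) (\<lambda>q. Y $$ q) (\<lambda>q. mat_unit n (fst q) (snd q)))"
    "j < dim_col (lincomb_m n (mat_indices n) (\<lambda>q. Y $$ q) (\<lambda>q. mat_unit n (fst q) (snd q)))"
  hence ij: "i < n" "j < n"
    by auto
  have "lincomb_m n (mat_indices n) (\<lambda>q. Y $$ q) (\<lambda>q. mat_unit n (fst q) (snd q)) $$ (i,j)
      = (\<Sum>q\<in>mat_indices n. if q = (i,j) then Y $$ q else 0)"
    unfolding index_lincomb_m[OF ij]
  proof (rule sum.cong[OF refl])
    fix q
    assume "q \<in> mat_indices n"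
    thus "Y $$ q * mat_unit n (fst q) (snd q) $$ (i,j) = (if q = (i,j) then Y $$ q else 0)"
      using ij by (cases q) (auto simp: mat_unit_def)
  qed
  thus "Y $$ (i,j) = lincomb_m n (mat_indices n) (\<lambda>q. Y $$ q) (\<lambda>q. mat_unit n (fst q) (snd q)) $$ (i,j)"
    using ij by simp
qed (use assms in auto)

lemma orthonormal_basis_completeness:
  assumes "hs_orthonormal_basis n I F" "q \<in> mat_indices n" "q' \<in> mat_indices n"
  shows "(\<Sum>i\<in>I. cnj (F i $$ q) * F i $$ q') = (if q = q' then 1 else 0)"
proof -
  let ?U = "mat_unit n (fst q) (snd q)"
  have F: "F i \<in> carrier_mat n n" if "i \<in> I" for i
    using assms(1) that unfolding hs_orthonormal_basis_def hs_orthonormal_def by blast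
  have "(if q = q' then 1 else 0) = ?U $$ q'"
    using assms(2,3) by (cases q, cases q') (auto simp: mat_unit_def)
  also have "\<dots> = lincomb_m n I (\<lambda>i. hs_inner (F i) ?U) F $$ q'"
    using orthonormal_basis_expansion[OF assms(1) mat_unit_carrier] by simp
  also have "\<dots> = (\<Sum>i\<in>I. hs_inner (F i) ?U * F i $$ q')"
    using assms(3) by (cases q') (simp add: index_lincomb_m)
  also have "\<dots> = (\<Sum>i\<in>I. cnj (F i $$ q) * F i $$ q')"
  proof (rule sum.cong[OF refl])
    fix i
    assume "i \<in> I"
    have "hs_inner (F i) ?U = cnj (hs_inner ?U (F i))"
      using F[OF \<open>i \<in> I\<close>] by (subst hs_inner_swap[of ?U n]) auto
    also have "\<dots> = cnj (F i $$ q)"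
      using assms(2) F[OF \<open>i \<in> I\<close>] by (cases q) (simp add: hs_inner_mat_unit)
    finally show "hs_inner (F i) ?U * F i $$ q' = cnj (F i $$ q) * F i $$ q'"
      by simp
  qed
  finally show ?thesis
    by simp
qed

lemma orthonormal_basis_twirl:
  assumes "hs_orthonormal_basis n I F" "Y \<in> carrier_mat n n"
  shows "lincomb_m n I (\<lambda>i. 1) (\<lambda>i. adj (F i) * Y * F i) = mtrace Y \<cdot>\<^sub>m 1\<^sub>m n"
proof (rule eq_matI)
  fix a b
  assume "a < dim_row (mtrace Y \<cdot>\<^sub>m 1\<^sub>m n)" "b < dim_col (mtrace Y \<cdot>\<^sub>m 1\<^sub>m n)"
  hence ab: "a < n" "b < n"
    by auto
  have F: "F i \<in> carrier_mat n n" if "i \<in> I" for i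
    using assms(1) that unfolding hs_orthonormal_basis_def hs_orthonormal_def by blast
  have "lincomb_m n I (\<lambda>i. 1) (\<lambda>i. adj (F i) * Y * F i) $$ (a,b)
      = (\<Sum>i\<in>I. \<Sum>k<n. \<Sum>l<n. cnj (F i $$ (k,a)) * Y $$ (k,l) * F i $$ (l,b))"
    using ab assms(2) F
    by (auto simp: index_lincomb_m index_mult_mat_square3[OF adj_carrier[OF F] assms(2) F]
        index_adj_square[OF F] simp del: index_adj intro!: sum.cong)
  also have "\<dots> = (\<Sum>k<n. \<Sum>l<n. \<Sum>i\<in>I. cnj (F i $$ (k,a)) * Y $$ (k,l) * F i $$ (l,b))"
    by (subst sum.swap) (simp add: sum.swap[of _ I])
  also have "\<dots> = (\<Sum>k<n. \<Sum>l<n. Y $$ (k,l) * (\<Sum>i\<in>I. cnj (F i $$ (k,a)) * F i $$ (l,b)))"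
    by (simp add: sum_distrib_left mult_ac)
  also have "\<dots> = (\<Sum>k<n. \<Sum>l<n. if (k,a) = (l,b) then Y $$ (k,l) else 0)"
    using ab by (intro sum.cong refl) (simp add: orthonormal_basis_completeness[OF assms(1)])
  also have "\<dots> = (mtrace Y \<cdot>\<^sub>m 1\<^sub>m n) $$ (a,b)"
    using ab assms(2) by (auto simp: mtrace_def)
  finally show "lincomb_m n I (\<lambda>i. 1) (\<lambda>i. adj (F i) * Y * F i) $$ (a,b) = (mtrace Y \<cdot>\<^sub>m 1\<^sub>m n) $$ (a,b)" .
qed auto

section \<open>Code projectors\<close>

lemma hs_inner_self_adjoint_left:
  "adj X = X \<Longrightarrow> hs_inner X Y = mtrace (X * Y)"
  by (simp add: hs_inner_def)

lemma cnj_hs_inner_sandwich: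
  assumes "X \<in> carrier_mat n n" "adj X = X" "Y \<in> carrier_mat n n" "Z \<in> carrier_mat n n"
  shows "cnj (hs_inner X (adj Y * X * Z)) = hs_inner X (adj Z * X * Y)"
proof -
  have "cnj (hs_inner X (adj Y * X * Z)) = hs_inner (adj Y * X * Z) X"
    using assms by (subst hs_inner_swap[of X n]) auto
  also have "\<dots> = mtrace ((adj Z * X * Y) * X)"
    unfolding hs_inner_def using assms by (simp add: adj_mult[of _ n n _ n] assoc_mult_mat[of _ n n _ n _ n])
  also have "\<dots> = mtrace (X * (adj Z * X * Y))"
    using assms by (intro mtrace_mult_commute[of _ n]) auto
  also have "\<dots> = hs_inner X (adj Z * X * Y)"
    using assms by (simp add: hs_inner_self_adjoint_left)
  finally show ?thesis .
qed

lemma proj_of_carrier [simp]: "proj_of n K c \<in> carrier_mat n n"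
  by (simp add: proj_of_def)

lemma index_proj_of: "a < n \<Longrightarrow> b < n \<Longrightarrow> proj_of n K c $$ (a,b) = (\<Sum>k<K. c k $ a * cnj (c k $ b))"
  by (simp add: proj_of_def)

lemma adj_proj_of: "adj (proj_of n K c) = proj_of n K c"
  by (intro eq_matI) (auto simp: proj_of_def mult.commute)

lemma orthonormal_family_inner:
  assumes "orthonormal_family n K c" "k < K" "l < K"
  shows "(\<Sum>j<n. c k $ j * cnj (c l $ j)) = (if k = l then 1 else 0)"
proof -
  have "c l \<in> carrier_vec n"
    using assms unfolding orthonormal_family_def by blast
  hence "c k \<bullet>c c l = (\<Sum>j<n. c k $ j * cnj (c l $ j))"
    by (simp add: scalar_prod_def atLeast0LessThan)
  thus ?thesis
    using assms unfolding orthonormal_family_def by simp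
qed

locale code_projector =
  fixes n K :: nat and c :: "nat \<Rightarrow> complex vec"
  assumes orthonormal: "orthonormal_family n K c"
begin

abbreviation P :: "complex mat" where
  "P \<equiv> proj_of n K c"

lemma proj_idem [simp]: "P * P = P"
proof (rule eq_matI)
  fix a b
  assume "a < dim_row P" "b < dim_col P"
  hence ab: "a < n" "b < n"
    by (auto simp: proj_of_def)
  have "(P * P) $$ (a,b) = (\<Sum>j<n. (\<Sum>k<K. c k $ a * cnj (c k $ j)) * (\<Sum>l<K. c l $ j * cnj (c l $ b)))"
    using ab by (auto simp: index_mult_mat_square[OF proj_of_carrier proj_of_carrier ab] index_proj_of
        intro!: sum.cong)
  also have "\<dots> = (\<Sum>k<K. \<Sum>l<K. c k $ a * cnj (c l $ b) * (\<Sum>j<n. c l $ j * cnj (c k $ j)))"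
    by (simp add: sum_distrib_left sum_distrib_right sum.swap[of _ "{..<n}"] mult_ac)
  also have "\<dots> = (\<Sum>k<K. \<Sum>l<K. c k $ a * cnj (c l $ b) * (if l = k then 1 else 0))"
    using orthonormal by (intro sum.cong refl) (simp add: orthonormal_family_inner)
  also have "\<dots> = P $$ (a,b)"
    using ab by (simp add: index_proj_of)
  finally show "(P * P) $$ (a,b) = P $$ (a,b)" .
qed (auto simp: proj_of_def)

lemma proj_idem_left [simp]: "Z \<in> carrier_mat n n \<Longrightarrow> P * (P * Z) = P * Z"
  by (simp add: assoc_mult_mat[symmetric, of P n n P n Z n])

lemma mtrace_proj: "mtrace P = of_nat K"
proof -
  have "mtrace P = (\<Sum>k<K. \<Sum>a<n. c k $ a * cnj (c k $ a))"
    by (simp add: mtrace_def proj_of_def sum.swap[of _ "{..<n}"])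
  also have "\<dots> = (\<Sum>k<K. 1)"
    using orthonormal by (intro sum.cong refl) (simp add: orthonormal_family_inner)
  finally show ?thesis
    by simp
qed

lemma hs_inner_proj_left: "hs_inner P Y = mtrace (P * Y)"
  by (simp add: hs_inner_self_adjoint_left adj_proj_of)

lemma hs_inner_proj_self: "hs_inner P P = of_nat K"
  by (simp add: hs_inner_proj_left mtrace_proj)

lemma mtrace_compress:
  assumes "X \<in> carrier_mat n n"
  shows "mtrace (P * X * P) = mtrace (P * X)"
proof -
  have "mtrace ((P * X) * P) = mtrace (P * (P * X))"
    using assms by (intro mtrace_mult_commute[of _ n]) auto
  thus ?thesis
    using assms by simp
qed

lemma hs_inner_proj_compress:
  assumes "Y \<in> carrier_mat n n"
  shows "hs_inner P Y = hs_inner P (P * Y * P)"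
proof -
  have "P * (P * Y * P) = P * Y * P"
    using assms by (simp add: assoc_mult_mat[of _ n n _ n _ n])
  thus ?thesis
    using assms by (simp add: hs_inner_proj_left mtrace_compress)
qed

lemma hs_inner_proj_sandwich:
  assumes "Y \<in> carrier_mat n n" "Z \<in> carrier_mat n n"
  shows "hs_inner P (adj Y * P * Z) = hs_inner (P * Y * P) (P * Z * P)"
proof -
  have "hs_inner (P * Y * P) (P * Z * P) = mtrace (P * (adj Y * P * Z) * P)"
    unfolding hs_inner_def using assms
    by (simp add: adj_mult[of _ n n _ n] adj_proj_of assoc_mult_mat[of _ n n _ n _ n])
  also have "\<dots> = hs_inner P (adj Y * P * Z)"
    using assms by (simp add: mtrace_compress hs_inner_proj_left)
  finally show ?thesis
    by simp
qed

text \<open>Cauchy--Schwarz for \<open>P\<close> and the compression \<open>P F P\<close>: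
  \<open>|\<langle>P, F\<rangle>|\<^sup>2 = |\<langle>P, P F P\<rangle>|\<^sup>2 \<le> \<langle>P, P\<rangle> \<langle>P F P, P F P\<rangle> = K \<langle>P, F\<^sup>\<dagger> P F\<rangle>\<close>.\<close>
lemma proj_Cauchy_Schwarz:
  assumes F: "F \<in> carrier_mat n n"
  shows "Im (of_nat K * hs_inner P (adj F * P * F) - cnj (hs_inner P F) * hs_inner P F) = 0 \<and>
         0 \<le> Re (of_nat K * hs_inner P (adj F * P * F) - cnj (hs_inner P F) * hs_inner P F)"
proof -
  define Y where "Y = P * F * P"
  have Y: "Y \<in> carrier_mat n n"
    using F by (simp add: Y_def)
  define r where "r = (\<Sum>q\<in>mat_indices n. (cmod (Y $$ q))\<^sup>2)"
  have YY: "hs_inner Y Y = of_real r"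
    unfolding r_def using hs_inner_self[OF Y] .
  have sandwich: "hs_inner P (adj F * P * F) = of_real r"
    unfolding YY[symmetric] Y_def using F by (simp add: hs_inner_proj_sandwich)
  have "hs_inner P F = hs_inner P Y"
    unfolding Y_def using F by (rule hs_inner_proj_compress)
  hence "(cmod (hs_inner P F))\<^sup>2 \<le> of_nat K * r"
    using hs_inner_Cauchy_Schwarz[OF proj_of_carrier[of n K c] Y] by (simp add: hs_inner_proj_self YY)
  moreover have "cnj (hs_inner P F) * hs_inner P F = of_real ((cmod (hs_inner P F))\<^sup>2)"
    by (simp add: complex_norm_square mult.commute del: of_real_power)
  ultimately show ?thesis
    unfolding sandwich by simp
qed

lemma hs_inner_proj_if_compress_scalar:
  assumes "Y \<in> carrier_mat n n" "P * Y * P = g \<cdot>\<^sub>m P"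
  shows "hs_inner P Y = g * of_nat K"
  using assms
  by (simp add: hs_inner_proj_compress[of Y] hs_inner_smult_right[OF proj_of_carrier proj_of_carrier]
      hs_inner_proj_self)

lemma hs_inner_proj_sandwich_if_compress_scalar:
  assumes "Y \<in> carrier_mat n n" "Z \<in> carrier_mat n n"
    and "P * Y * P = g \<cdot>\<^sub>m P" "P * Z * P = h \<cdot>\<^sub>m P"
  shows "hs_inner P (adj Y * P * Z) = cnj g * h * of_nat K"
  using assms
  by (simp add: hs_inner_proj_sandwich hs_inner_smult_left[OF proj_of_carrier smult_carrier_mat]
      hs_inner_smult_right[OF proj_of_carrier proj_of_carrier] hs_inner_proj_self)

lemma hs_inner_proj_smult_one: "hs_inner P (a \<cdot>\<^sub>m 1\<^sub>m n) = a * of_nat K"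
proof -
  have "P * (a \<cdot>\<^sub>m 1\<^sub>m n) = a \<cdot>\<^sub>m P"
    using mult_smult_distrib[of P n n "1\<^sub>m n" n a] right_mult_one_mat[OF proj_of_carrier] by simp
  hence "hs_inner P (a \<cdot>\<^sub>m 1\<^sub>m n) = mtrace (a \<cdot>\<^sub>m P)"
    by (simp add: hs_inner_proj_left)
  also have "\<dots> = a * mtrace P"
    by (rule mtrace_smult[OF proj_of_carrier])
  finally show ?thesis
    by (simp add: mtrace_proj)
qed

end

section \<open>Enumerators\<close>

lemma idx_eq_Sigma: "idx Xi m d = Sigma Xi (\<lambda>\<xi>. {..<m \<xi>} \<times> {..<d \<xi>})"
  by (auto simp: idx_def)

lemma finite_idx: "finite Xi \<Longrightarrow> finite (idx Xi m d)"
  by (simp add: idx_eq_Sigma)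

lemma sum_idx:
  "finite Xi \<Longrightarrow> (\<Sum>p\<in>idx Xi m d. f p) = (\<Sum>\<xi>\<in>Xi. \<Sum>\<alpha><m \<xi>. \<Sum>i<d \<xi>. f (\<xi>,\<alpha>,i))"
  by (simp add: idx_eq_Sigma sum.Sigma sum.cartesian_product)

lemma dim_A_enum [simp]:
  "dim_row (A_enum n m d E X \<xi>) = m \<xi>" "dim_col (A_enum n m d E X \<xi>) = m \<xi>"
  "A_enum n m d E X \<xi> \<in> carrier_mat (m \<xi>) (m \<xi>)"
  by (simp_all add: A_enum_def)

lemma dim_B_enum [simp]:
  "dim_row (B_enum n m d E X \<xi>) = m \<xi>" "dim_col (B_enum n m d E X \<xi>) = m \<xi>"
  "B_enum n m d E X \<xi> \<in> carrier_mat (m \<xi>) (m \<xi>)"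
  by (simp_all add: B_enum_def)

lemma twirl_unit_carrier [simp]: "Twirl_unit n d E \<rho> \<mu> \<nu> X \<in> carrier_mat n n"
  by (simp add: Twirl_unit_def)

locale sector_basis =
  fixes n :: nat and Xi :: "'x set" and m d :: "'x \<Rightarrow> nat"
    and E :: "'x \<Rightarrow> nat \<Rightarrow> nat \<Rightarrow> complex mat"
  assumes finite_types: "finite Xi"
    and orthonormal_basis: "hs_orthonormal_basis n (idx Xi m d) (\<lambda>(\<xi>,\<alpha>,i). E \<xi> \<alpha> i)"
begin

abbreviation basis :: "'x \<times> nat \<times> nat \<Rightarrow> complex mat" where
  "basis \<equiv> \<lambda>(\<xi>,\<alpha>,i). E \<xi> \<alpha> i"

lemma basis_carrier: "p \<in> idx Xi m d \<Longrightarrow> basis p \<in> carrier_mat n n"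
  using orthonormal_basis unfolding hs_orthonormal_basis_def hs_orthonormal_def by blast

lemma E_carrier [simp]: "\<xi> \<in> Xi \<Longrightarrow> \<alpha> < m \<xi> \<Longrightarrow> i < d \<xi> \<Longrightarrow> E \<xi> \<alpha> i \<in> carrier_mat n n"
  using basis_carrier[of "(\<xi>,\<alpha>,i)"] by (simp add: idx_def)

lemma hs_inner_E_E:
  assumes "\<xi> \<in> Xi" "\<alpha> < m \<xi>" "i < d \<xi>" "\<xi>' \<in> Xi" "\<alpha>' < m \<xi>'" "i' < d \<xi>'"
  shows "hs_inner (E \<xi> \<alpha> i) (E \<xi>' \<alpha>' i') = (if \<xi> = \<xi>' \<and> \<alpha> = \<alpha>' \<and> i = i' then 1 else 0)"
proof -
  have "(\<xi>,\<alpha>,i) \<in> idx Xi m d" "(\<xi>',\<alpha>',i') \<in> idx Xi m d"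
    using assms by (auto simp: idx_def)
  thus ?thesis
    using orthonormal_basis unfolding hs_orthonormal_basis_def hs_orthonormal_def by fastforce
qed

lemma orthonormal_copy: "\<xi> \<in> Xi \<Longrightarrow> \<alpha> < m \<xi> \<Longrightarrow> hs_orthonormal n {..<d \<xi>} (E \<xi> \<alpha>)"
  unfolding hs_orthonormal_def by (auto simp: hs_inner_E_E)

lemma E_in_isotypic_sector:
  assumes "\<xi> \<in> Xi" "\<alpha> < m \<xi>" "i < d \<xi>"
  shows "E \<xi> \<alpha> i \<in> isotypic_sector n m d E \<xi>"
proof -
  have "E \<xi> \<alpha> i = lincomb_m n ({..<m \<xi>} \<times> {..<d \<xi>}) (\<lambda>p. if p = (\<alpha>,i) then 1 else 0) (\<lambda>(\<alpha>,i). E \<xi> \<alpha> i)"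
    using assms lincomb_m_indicator[of "{..<m \<xi>} \<times> {..<d \<xi>}" "(\<alpha>,i)" "\<lambda>(\<alpha>,i). E \<xi> \<alpha> i" n] by simp
  thus ?thesis
    unfolding isotypic_sector_def span_m_def by blast
qed

lemma hs_inner_Pi_unit_mat_unit:
  assumes "\<xi> \<in> Xi" "\<alpha> < m \<xi>" "\<beta> < m \<xi>" "q \<in> mat_indices n" "Y \<in> carrier_mat n n"
  shows "hs_inner (Pi_unit n d E \<xi> \<alpha> \<beta> (mat_unit n (fst q) (snd q))) Y
    = (\<Sum>i<d \<xi>. E \<xi> \<alpha> i $$ q * hs_inner (E \<xi> \<beta> i) Y)"
proof -
  let ?U = "mat_unit n (fst q) (snd q)"
  have "hs_inner (Pi_unit n d E \<xi> \<alpha> \<beta> ?U) Y = (\<Sum>i<d \<xi>. cnj (hs_inner (E \<xi> \<alpha> i) ?U) * hs_inner (E \<xi> \<beta> i) Y)"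
    unfolding Pi_unit_def by (rule hs_inner_lincomb_m_left) (use assms in auto)
  also have "\<dots> = (\<Sum>i<d \<xi>. E \<xi> \<alpha> i $$ q * hs_inner (E \<xi> \<beta> i) Y)"
  proof (rule sum.cong[OF refl])
    fix i
    assume "i \<in> {..<d \<xi>}"
    hence "cnj (hs_inner (E \<xi> \<alpha> i) ?U) = hs_inner ?U (E \<xi> \<alpha> i)"
      using assms hs_inner_swap[OF mat_unit_carrier, of "E \<xi> \<alpha> i" n "fst q" "snd q"] by simp
    also have "\<dots> = E \<xi> \<alpha> i $$ q"
      using assms \<open>i \<in> {..<d \<xi>}\<close> by (cases q) (simp add: hs_inner_mat_unit)
    finally show "cnj (hs_inner (E \<xi> \<alpha> i) ?U) * hs_inner (E \<xi> \<beta> i) Y = E \<xi> \<alpha> i $$ q * hs_inner (E \<xi> \<beta> i) Y"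
      by simp
  qed
  finally show ?thesis .
qed

lemma A_enum_entry:
  assumes "\<xi> \<in> Xi" "\<alpha> < m \<xi>" "\<beta> < m \<xi>" "X \<in> carrier_mat n n"
  shows "A_enum n m d E X \<xi> $$ (\<alpha>,\<beta>)
    = (\<Sum>i<d \<xi>. hs_inner (E \<xi> \<alpha> i) X * cnj (hs_inner (E \<xi> \<beta> i) X))"
proof -
  have "A_enum n m d E X \<xi> $$ (\<alpha>,\<beta>) = hs_inner X (Pi_unit n d E \<xi> \<alpha> \<beta> X)"
    using assms by (simp add: A_enum_def)
  also have "\<dots> = (\<Sum>i<d \<xi>. hs_inner (E \<xi> \<alpha> i) X * hs_inner X (E \<xi> \<beta> i))"
    unfolding Pi_unit_def by (rule hs_inner_lincomb_m_right) (use assms in auto)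
  also have "\<dots> = (\<Sum>i<d \<xi>. hs_inner (E \<xi> \<alpha> i) X * cnj (hs_inner (E \<xi> \<beta> i) X))"
    using assms by (intro sum.cong refl) (simp add: hs_inner_swap[of "E \<xi> \<beta> _" n X])
  finally show ?thesis .
qed

lemma B_enum_entry:
  assumes "\<xi> \<in> Xi" "\<alpha> < m \<xi>" "\<beta> < m \<xi>" "X \<in> carrier_mat n n"
  shows "B_enum n m d E X \<xi> $$ (\<alpha>,\<beta>) = (\<Sum>i<d \<xi>. hs_inner X (adj (E \<xi> \<alpha> i) * X * E \<xi> \<beta> i))"
proof -
  have "B_enum n m d E X \<xi> $$ (\<alpha>,\<beta>) = hs_inner X (Twirl_unit n d E \<xi> \<alpha> \<beta> X)"
    using assms by (simp add: B_enum_def)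
  also have "\<dots> = (\<Sum>i<d \<xi>. 1 * hs_inner X (adj (E \<xi> \<alpha> i) * X * E \<xi> \<beta> i))"
    unfolding Twirl_unit_def by (rule hs_inner_lincomb_m_right) (use assms in auto)
  finally show ?thesis
    by simp
qed

lemma hermitian_A_enum:
  assumes "\<xi> \<in> Xi" "X \<in> carrier_mat n n"
  shows "hermitian (A_enum n m d E X \<xi>)"
  unfolding hermitian_def
  using assms by (auto intro!: eq_matI simp: A_enum_entry mult.commute)

lemma hermitian_B_enum:
  assumes "\<xi> \<in> Xi" "X \<in> carrier_mat n n" "adj X = X"
  shows "hermitian (B_enum n m d E X \<xi>)"
  unfolding hermitian_def
proof (intro conjI eq_matI)
  fix a b
  assume "a < dim_row (B_enum n m d E X \<xi>)" "b < dim_col (B_enum n m d E X \<xi>)"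
  hence ab: "a < m \<xi>" "b < m \<xi>"
    by auto
  have "adj (B_enum n m d E X \<xi>) $$ (a,b) = (\<Sum>i<d \<xi>. cnj (hs_inner X (adj (E \<xi> b i) * X * E \<xi> a i)))"
    using assms ab by (simp add: B_enum_entry)
  also have "\<dots> = B_enum n m d E X \<xi> $$ (a,b)"
    using assms ab by (auto simp: B_enum_entry cnj_hs_inner_sandwich[of X n] intro!: sum.cong)
  finally show "adj (B_enum n m d E X \<xi>) $$ (a,b) = B_enum n m d E X \<xi> $$ (a,b)" .
qed auto

definition copy_comb :: "'x \<Rightarrow> complex vec \<Rightarrow> nat \<Rightarrow> complex mat" where
  "copy_comb \<xi> v i = lincomb_m n {..<m \<xi>} (\<lambda>\<beta>. v $ \<beta>) (\<lambda>\<beta>. E \<xi> \<beta> i)"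

lemma copy_comb_carrier [simp]: "copy_comb \<xi> v i \<in> carrier_mat n n"
  by (simp add: copy_comb_def)

lemma hs_inner_copy_comb:
  assumes "\<xi> \<in> Xi" "i < d \<xi>" "X \<in> carrier_mat n n"
  shows "hs_inner X (copy_comb \<xi> v i) = (\<Sum>\<beta><m \<xi>. v $ \<beta> * cnj (hs_inner (E \<xi> \<beta> i) X))"
  unfolding copy_comb_def using assms
  by (subst hs_inner_lincomb_m_right) (auto simp: hs_inner_swap[of X n] intro!: sum.cong)

lemma quadratic_form_A_enum:
  assumes "\<xi> \<in> Xi" "v \<in> carrier_vec (m \<xi>)" "X \<in> carrier_mat n n"
  shows "(A_enum n m d E X \<xi> *\<^sub>v v) \<bullet>c v
    = (\<Sum>i<d \<xi>. cnj (hs_inner X (copy_comb \<xi> v i)) * hs_inner X (copy_comb \<xi> v i))"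
proof -
  define a where "a \<alpha> i = hs_inner (E \<xi> \<alpha> i) X" for \<alpha> i
  have "(A_enum n m d E X \<xi> *\<^sub>v v) \<bullet>c v
      = (\<Sum>\<alpha><m \<xi>. \<Sum>\<beta><m \<xi>. (\<Sum>i<d \<xi>. a \<alpha> i * cnj (a \<beta> i)) * v $ \<beta> * cnj (v $ \<alpha>))"
    using cscalar_prod_mult_mat_vec[OF dim_A_enum(3)[of n m d E X] assms(2)] assms
    unfolding a_def by (auto simp: A_enum_entry intro!: sum.cong)
  also have "\<dots> = (\<Sum>i<d \<xi>. \<Sum>\<alpha><m \<xi>. \<Sum>\<beta><m \<xi>. (cnj (v $ \<alpha>) * a \<alpha> i) * (v $ \<beta> * cnj (a \<beta> i)))"
    by (simp add: sum_distrib_left sum_distrib_right sum.swap[of _ "{..<d \<xi>}"] mult_ac)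
  also have "\<dots> = (\<Sum>i<d \<xi>. (\<Sum>\<alpha><m \<xi>. cnj (v $ \<alpha>) * a \<alpha> i) * (\<Sum>\<beta><m \<xi>. v $ \<beta> * cnj (a \<beta> i)))"
    by (simp add: sum_product)
  also have "\<dots> = (\<Sum>i<d \<xi>. cnj (hs_inner X (copy_comb \<xi> v i)) * hs_inner X (copy_comb \<xi> v i))"
    using assms by (intro sum.cong refl) (simp add: hs_inner_copy_comb a_def)
  finally show ?thesis .
qed

lemma quadratic_form_B_enum:
  assumes "\<xi> \<in> Xi" "v \<in> carrier_vec (m \<xi>)" "X \<in> carrier_mat n n"
  shows "(B_enum n m d E X \<xi> *\<^sub>v v) \<bullet>c v
    = (\<Sum>i<d \<xi>. hs_inner X (adj (copy_comb \<xi> v i) * X * copy_comb \<xi> v i))"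
proof -
  define b where "b \<alpha> \<beta> i = hs_inner X (adj (E \<xi> \<alpha> i) * X * E \<xi> \<beta> i)" for \<alpha> \<beta> i
  have sandwich: "hs_inner X (adj (copy_comb \<xi> v i) * X * copy_comb \<xi> v i)
      = (\<Sum>\<alpha><m \<xi>. \<Sum>\<beta><m \<xi>. cnj (v $ \<alpha>) * (v $ \<beta> * b \<alpha> \<beta> i))" if "i < d \<xi>" for i
  proof -
    have "adj (copy_comb \<xi> v i) * X * copy_comb \<xi> v i = lincomb_m n {..<m \<xi>} (\<lambda>\<alpha>. cnj (v $ \<alpha>))
        (\<lambda>\<alpha>. lincomb_m n {..<m \<xi>} (\<lambda>\<beta>. v $ \<beta>) (\<lambda>\<beta>. adj (E \<xi> \<alpha> i) * X * E \<xi> \<beta> i))"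
      unfolding copy_comb_def by (rule sandwich_lincomb_m) (use assms that in auto)
    hence "hs_inner X (adj (copy_comb \<xi> v i) * X * copy_comb \<xi> v i) = (\<Sum>\<alpha><m \<xi>. cnj (v $ \<alpha>) *
        hs_inner X (lincomb_m n {..<m \<xi>} (\<lambda>\<beta>. v $ \<beta>) (\<lambda>\<beta>. adj (E \<xi> \<alpha> i) * X * E \<xi> \<beta> i)))"
      by (simp only:) (rule hs_inner_lincomb_m_right, use assms that in auto)
    also have "\<dots> = (\<Sum>\<alpha><m \<xi>. \<Sum>\<beta><m \<xi>. cnj (v $ \<alpha>) * (v $ \<beta> * b \<alpha> \<beta> i))"
      unfolding b_def sum_distrib_left[symmetric]
      by (intro sum.cong refl arg_cong2[where f = times] hs_inner_lincomb_m_right) (use assms that in auto)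
    finally show ?thesis .
  qed
  have "(B_enum n m d E X \<xi> *\<^sub>v v) \<bullet>c v = (\<Sum>\<alpha><m \<xi>. \<Sum>\<beta><m \<xi>. (\<Sum>i<d \<xi>. b \<alpha> \<beta> i) * v $ \<beta> * cnj (v $ \<alpha>))"
    using cscalar_prod_mult_mat_vec[OF dim_B_enum(3)[of n m d E X] assms(2)] assms
    unfolding b_def by (auto simp: B_enum_entry intro!: sum.cong)
  also have "\<dots> = (\<Sum>i<d \<xi>. \<Sum>\<alpha><m \<xi>. \<Sum>\<beta><m \<xi>. cnj (v $ \<alpha>) * (v $ \<beta> * b \<alpha> \<beta> i))"
    by (simp add: sum_distrib_left sum_distrib_right sum.swap[of _ "{..<d \<xi>}"] mult_ac)
  also have "\<dots> = (\<Sum>i<d \<xi>. hs_inner X (adj (copy_comb \<xi> v i) * X * copy_comb \<xi> v i))"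
    by (simp add: sandwich)
  finally show ?thesis .
qed

lemma A_enum_psd:
  assumes "\<xi> \<in> Xi" "X \<in> carrier_mat n n"
  shows "loewner_le (0\<^sub>m (m \<xi>) (m \<xi>)) (A_enum n m d E X \<xi>)"
proof (rule loewner_leI)
  fix v :: "complex vec"
  assume v: "v \<in> carrier_vec (m \<xi>)"
  have "0\<^sub>m (m \<xi>) (m \<xi>) *\<^sub>v v = 0\<^sub>v (m \<xi>)"
    using v by (intro eq_vecI) auto
  hence "(A_enum n m d E X \<xi> *\<^sub>v v) \<bullet>c v - (0\<^sub>m (m \<xi>) (m \<xi>) *\<^sub>v v) \<bullet>c v
      = of_real (\<Sum>i<d \<xi>. (cmod (hs_inner X (copy_comb \<xi> v i)))\<^sup>2)"
    using v assms unfolding quadratic_form_A_enum[OF assms(1) v assms(2)] of_real_sum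
    by (auto simp: complex_norm_square mult.commute simp del: of_real_power intro!: sum.cong)
  thus "Im ((A_enum n m d E X \<xi> *\<^sub>v v) \<bullet>c v - (0\<^sub>m (m \<xi>) (m \<xi>) *\<^sub>v v) \<bullet>c v) = 0 \<and>
        0 \<le> Re ((A_enum n m d E X \<xi> *\<^sub>v v) \<bullet>c v - (0\<^sub>m (m \<xi>) (m \<xi>) *\<^sub>v v) \<bullet>c v)"
    by (simp add: sum_nonneg)
qed auto

lemma sum_mtrace_A_enum:
  assumes "X \<in> carrier_mat n n"
  shows "(\<Sum>\<xi>\<in>Xi. mtrace (A_enum n m d E X \<xi>)) = hs_inner X X"
proof -
  have "(\<Sum>\<xi>\<in>Xi. mtrace (A_enum n m d E X \<xi>))
      = (\<Sum>p\<in>idx Xi m d. cnj (hs_inner (basis p) X) * hs_inner (basis p) X)"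
    using assms
    by (auto simp: sum_idx[OF finite_types] mtrace_def A_enum_entry mult.commute intro!: sum.cong)
  also have "\<dots> = hs_inner X X"
    using orthonormal_basis_Parseval[OF orthonormal_basis assms] .
  finally show ?thesis .
qed

lemma sum_mtrace_B_enum:
  assumes "X \<in> carrier_mat n n"
  shows "(\<Sum>\<xi>\<in>Xi. mtrace (B_enum n m d E X \<xi>)) = hs_inner X (mtrace X \<cdot>\<^sub>m 1\<^sub>m n)"
proof -
  have "(\<Sum>\<xi>\<in>Xi. mtrace (B_enum n m d E X \<xi>))
      = (\<Sum>p\<in>idx Xi m d. 1 * hs_inner X (adj (basis p) * X * basis p))"
    using assms
    by (auto simp: sum_idx[OF finite_types] mtrace_def B_enum_entry intro!: sum.cong)
  also have "\<dots> = hs_inner X (lincomb_m n (idx Xi m d) (\<lambda>p. 1) (\<lambda>p. adj (basis p) * X * basis p))"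
    using assms basis_carrier
    by (simp add: hs_inner_lincomb_m_right finite_idx[OF finite_types])
  also have "\<dots> = hs_inner X (mtrace X \<cdot>\<^sub>m 1\<^sub>m n)"
    by (simp add: orthonormal_basis_twirl[OF orthonormal_basis assms])
  finally show ?thesis .
qed

end

locale code_enumerators = sector_basis n Xi m d E + code_projector n K c
  for n :: nat and Xi :: "'x set" and m d :: "'x \<Rightarrow> nat" and E :: "'x \<Rightarrow> nat \<Rightarrow> nat \<Rightarrow> complex mat"
    and K :: nat and c :: "nat \<Rightarrow> complex vec"
begin

lemma A_enum_le_B_enum:
  assumes "\<xi> \<in> Xi"
  shows "loewner_le (A_enum n m d E P \<xi>) (of_nat K \<cdot>\<^sub>m B_enum n m d E P \<xi>)"
proof (rule loewner_leI)
  fix v :: "complex vec"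
  assume v: "v \<in> carrier_vec (m \<xi>)"
  let ?F = "copy_comb \<xi> v"
  have "(of_nat K \<cdot>\<^sub>m B_enum n m d E P \<xi>) *\<^sub>v v = of_nat K \<cdot>\<^sub>v (B_enum n m d E P \<xi> *\<^sub>v v)"
    using v by (intro smult_mult_mat_vec[OF dim_B_enum(3)])
  hence "((of_nat K \<cdot>\<^sub>m B_enum n m d E P \<xi>) *\<^sub>v v) \<bullet>c v - (A_enum n m d E P \<xi> *\<^sub>v v) \<bullet>c v
      = (\<Sum>i<d \<xi>. of_nat K * hs_inner P (adj (?F i) * P * ?F i) - cnj (hs_inner P (?F i)) * hs_inner P (?F i))"
    using v assms
    by (simp add: quadratic_form_A_enum quadratic_form_B_enum sum_distrib_left sum_subtractf)
  thus "Im (((of_nat K \<cdot>\<^sub>m B_enum n m d E P \<xi>) *\<^sub>v v) \<bullet>c v - (A_enum n m d E P \<xi> *\<^sub>v v) \<bullet>c v) = 0 \<and>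
        0 \<le> Re (((of_nat K \<cdot>\<^sub>m B_enum n m d E P \<xi>) *\<^sub>v v) \<bullet>c v - (A_enum n m d E P \<xi> *\<^sub>v v) \<bullet>c v)"
    using proj_Cauchy_Schwarz[OF copy_comb_carrier] by (simp add: Im_sum Re_sum sum_nonneg)
qed auto

lemma sum_mtrace_A_enum_proj: "(\<Sum>\<xi>\<in>Xi. mtrace (A_enum n m d E P \<xi>)) = of_nat K"
  by (simp add: sum_mtrace_A_enum hs_inner_proj_self)

lemma sum_mtrace_B_enum_proj: "(\<Sum>\<xi>\<in>Xi. mtrace (B_enum n m d E P \<xi>)) = of_nat K ^ 2"
  by (simp add: sum_mtrace_B_enum hs_inner_proj_smult_one mtrace_proj power2_eq_square)

text \<open>Detection makes every compression \<open>P E\<^sup>\<alpha>\<^sub>i P\<close> a multiple \<open>\<gamma>\<^sup>\<alpha>\<^sub>i P\<close>, so both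
  \<open>[A\<^sub>\<xi>]\<^sub>\<alpha>\<^sub>\<beta>\<close> and \<open>K [B\<^sub>\<xi>]\<^sub>\<alpha>\<^sub>\<beta>\<close> equal \<open>K\<^sup>2 \<Sum>\<^sub>i \<gamma>\<^sup>\<alpha>\<^sub>i \<gamma>\<^sup>\<beta>\<^sub>i\<^sup>*\<close>.\<close>
lemma A_enum_eq_smult_B_enum_if_detects:
  assumes xi: "\<xi> \<in> Xi" and detects: "detects P (isotypic_sector n m d E \<xi>)"
  shows "A_enum n m d E P \<xi> = of_nat K \<cdot>\<^sub>m B_enum n m d E P \<xi>"
proof (rule eq_matI)
  obtain \<gamma> where \<gamma>: "\<And>Y. Y \<in> isotypic_sector n m d E \<xi> \<Longrightarrow> P * Y * P = \<gamma> Y \<cdot>\<^sub>m P"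
    using bchoice[OF detects[unfolded detects_def]] by blast
  have compress: "P * E \<xi> \<alpha> i * P = \<gamma> (E \<xi> \<alpha> i) \<cdot>\<^sub>m P" if "\<alpha> < m \<xi>" "i < d \<xi>" for \<alpha> i
    using \<gamma> E_in_isotypic_sector[OF xi that] .
  fix a b
  assume "a < dim_row (of_nat K \<cdot>\<^sub>m B_enum n m d E P \<xi>)" "b < dim_col (of_nat K \<cdot>\<^sub>m B_enum n m d E P \<xi>)"
  hence ab: "a < m \<xi>" "b < m \<xi>"
    by auto
  have "A_enum n m d E P \<xi> $$ (a,b)
      = (\<Sum>i<d \<xi>. cnj (\<gamma> (E \<xi> a i) * of_nat K) * (\<gamma> (E \<xi> b i) * of_nat K))"
    using xi ab compress
    by (auto simp: A_enum_entry hs_inner_swap[of P n] hs_inner_proj_if_compress_scalar intro!: sum.cong)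
  also have "\<dots> = of_nat K * (\<Sum>i<d \<xi>. cnj (\<gamma> (E \<xi> a i)) * \<gamma> (E \<xi> b i) * of_nat K)"
    by (simp add: sum_distrib_left mult_ac)
  also have "\<dots> = (of_nat K \<cdot>\<^sub>m B_enum n m d E P \<xi>) $$ (a,b)"
    using xi ab compress
    by (auto simp: B_enum_entry hs_inner_proj_sandwich_if_compress_scalar intro!: sum.cong)
  finally show "A_enum n m d E P \<xi> $$ (a,b) = (of_nat K \<cdot>\<^sub>m B_enum n m d E P \<xi>) $$ (a,b)" .
qed auto

end

section \<open>The conjugation action on the isotypic decomposition\<close>

locale isotypic_setting =
  fixes G :: "('g, 'b) monoid_scheme" and rep :: "'g \<Rightarrow> complex mat" and n :: nat
    and Xi :: "'x set" and m d :: "'x \<Rightarrow> nat" and E :: "'x \<Rightarrow> nat \<Rightarrow> nat \<Rightarrow> complex mat"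
  assumes unitary: "unitary_rep G n rep"
    and decomposition: "isotypic_decomposition G n rep Xi m d E"

sublocale isotypic_setting \<subseteq> sector_basis n Xi m d E
proof
  show "finite Xi"
    using decomposition unfolding isotypic_decomposition_def by blast
  thus "hs_orthonormal_basis n (idx Xi m d) (\<lambda>(\<xi>,\<alpha>,i). E \<xi> \<alpha> i)"
    using decomposition finite_idx[of Xi m d]
    unfolding isotypic_decomposition_def hs_orthonormal_basis_def hs_orthonormal_def by fast
qed

context isotypic_setting
begin

lemma group_G: "group G"
  using unitary unfolding unitary_rep_def by blast

lemma rep_carrier [simp]: "g \<in> carrier G \<Longrightarrow> rep g \<in> carrier_mat n n"
  using unitary unfolding unitary_rep_def by blast

lemma adj_rep_mult_rep [simp]: "g \<in> carrier G \<Longrightarrow> adj (rep g) * rep g = 1\<^sub>m n"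
  using unitary unfolding unitary_rep_def by blast

lemma rep_mult_adj_rep [simp]: "g \<in> carrier G \<Longrightarrow> rep g * adj (rep g) = 1\<^sub>m n"
  using mat_mult_left_right_inverse[of "adj (rep g)" n "rep g"] by auto

lemma rep_mult: "g \<in> carrier G \<Longrightarrow> h \<in> carrier G \<Longrightarrow> rep (g \<otimes>\<^bsub>G\<^esub> h) = rep g * rep h"
  using unitary unfolding unitary_rep_def by blast

lemma mult_assoc_square [simp]:
  "(A :: complex mat) \<in> carrier_mat n n \<Longrightarrow> B \<in> carrier_mat n n \<Longrightarrow> C \<in> carrier_mat n n \<Longrightarrow> A * B * C = A * (B * C)"
  by (rule assoc_mult_mat)

lemma mult_one_square_right [simp]: "(A :: complex mat) \<in> carrier_mat n n \<Longrightarrow> A * 1\<^sub>m n = A"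
  by (rule right_mult_one_mat)

lemma mult_one_square_left [simp]: "(A :: complex mat) \<in> carrier_mat n n \<Longrightarrow> 1\<^sub>m n * A = A"
  by (rule left_mult_one_mat)

lemma rep_cancel [simp]:
  assumes "g \<in> carrier G" "X \<in> carrier_mat n n"
  shows "adj (rep g) * (rep g * X) = X" "rep g * (adj (rep g) * X) = X"
  using assms by (simp_all add: assoc_mult_mat[symmetric, of _ n n _ n _ n])

lemma inv_closed [simp]: "g \<in> carrier G \<Longrightarrow> inv\<^bsub>G\<^esub> g \<in> carrier G"
  using group_G by (simp add: group.inv_closed)

lemma rep_inv:
  assumes g: "g \<in> carrier G"
  shows "rep (inv\<^bsub>G\<^esub> g) = adj (rep g)"
proof -
  have "rep \<one>\<^bsub>G\<^esub> = 1\<^sub>m n"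
  proof -
    have one: "\<one>\<^bsub>G\<^esub> \<in> carrier G"
      using group_G by (simp add: group.is_monoid monoid.one_closed)
    hence "rep \<one>\<^bsub>G\<^esub> * rep \<one>\<^bsub>G\<^esub> = rep \<one>\<^bsub>G\<^esub>"
      using rep_mult[OF one one] group_G by (simp add: group.is_monoid monoid.l_one)
    thus ?thesis
      using rep_cancel(1)[OF one rep_carrier[OF one]] one by simp
  qed
  hence "rep g * rep (inv\<^bsub>G\<^esub> g) = 1\<^sub>m n"
    using rep_mult[OF g inv_closed[OF g]] g group_G by (simp add: group.r_inv)
  thus ?thesis
    using rep_cancel(1)[OF g rep_carrier[OF inv_closed[OF g]]] g by simp
qed

lemma conj_act_carrier [simp]: "g \<in> carrier G \<Longrightarrow> X \<in> carrier_mat n n \<Longrightarrow> conj_act rep g X \<in> carrier_mat n n"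
  by (simp add: conj_act_def)

lemma conj_act_lincomb_m:
  assumes "g \<in> carrier G" "finite I" "\<And>i. i \<in> I \<Longrightarrow> F i \<in> carrier_mat n n"
  shows "conj_act rep g (lincomb_m n I c F) = lincomb_m n I c (\<lambda>i. conj_act rep g (F i))"
  using assms unfolding conj_act_def by (simp add: mult_lincomb_m_left mult_lincomb_m_right)

lemma conj_act_inv_conj_act:
  assumes "g \<in> carrier G" "X \<in> carrier_mat n n"
  shows "conj_act rep (inv\<^bsub>G\<^esub> g) (conj_act rep g X) = X"
  using assms unfolding conj_act_def rep_inv[OF assms(1)] by simp

lemma hs_inner_conj_act_right:
  assumes g: "g \<in> carrier G" and X: "X \<in> carrier_mat n n" and Y: "Y \<in> carrier_mat n n"
  shows "hs_inner X (conj_act rep g Y) = hs_inner (conj_act rep (inv\<^bsub>G\<^esub> g) X) Y"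
proof -
  have "hs_inner X (conj_act rep g Y) = mtrace ((adj X * (rep g * Y)) * adj (rep g))"
    unfolding hs_inner_def conj_act_def using g X Y by simp
  also have "\<dots> = mtrace (adj (rep g) * (adj X * (rep g * Y)))"
    using g X Y by (intro mtrace_mult_commute) auto
  also have "\<dots> = hs_inner (conj_act rep (inv\<^bsub>G\<^esub> g) X) Y"
    unfolding hs_inner_def conj_act_def rep_inv[OF g] using g X Y by (simp add: adj_mult[of _ n n _ n])
  finally show ?thesis .
qed

lemma hs_inner_conj_act:
  assumes "g \<in> carrier G" "X \<in> carrier_mat n n" "Y \<in> carrier_mat n n"
  shows "hs_inner (conj_act rep g X) (conj_act rep g Y) = hs_inner X Y"
  using assms by (simp add: hs_inner_conj_act_right conj_act_inv_conj_act)

abbreviation block :: "'x \<Rightarrow> nat \<Rightarrow> complex mat set" where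
  "block \<xi> \<alpha> \<equiv> irrep_block n d E \<xi> \<alpha>"

lemma multiplicity_pos: "\<xi> \<in> Xi \<Longrightarrow> 0 < m \<xi>"
  using decomposition unfolding isotypic_decomposition_def by fastforce

lemma block_irreducible: "\<xi> \<in> Xi \<Longrightarrow> \<alpha> < m \<xi> \<Longrightarrow> irreducible_sub G n rep (block \<xi> \<alpha>)"
  using decomposition unfolding isotypic_decomposition_def by blast

lemma conj_act_block:
  "\<xi> \<in> Xi \<Longrightarrow> \<alpha> < m \<xi> \<Longrightarrow> g \<in> carrier G \<Longrightarrow> X \<in> block \<xi> \<alpha> \<Longrightarrow> conj_act rep g X \<in> block \<xi> \<alpha>"
  using block_irreducible unfolding irreducible_sub_def invariant_sub_def by blast

lemma block_expansion:
  assumes "\<xi> \<in> Xi" "\<alpha> < m \<xi>" "X \<in> block \<xi> \<alpha>"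
  shows "X = lincomb_m n {..<d \<xi>} (\<lambda>i. hs_inner (E \<xi> \<alpha> i) X) (E \<xi> \<alpha>)"
  using assms(3) lincomb_m_orthonormal_coeffs[OF orthonormal_copy[OF assms(1,2)]]
  unfolding irrep_block_def span_m_def by auto

lemma E_in_block:
  assumes "\<xi> \<in> Xi" "\<alpha> < m \<xi>" "i < d \<xi>"
  shows "E \<xi> \<alpha> i \<in> block \<xi> \<alpha>"
proof -
  have "E \<xi> \<alpha> i = lincomb_m n {..<d \<xi>} (\<lambda>j. if j = i then 1 else 0) (E \<xi> \<alpha>)"
    using assms by (simp add: lincomb_m_indicator)
  thus ?thesis
    unfolding irrep_block_def span_m_def by blast
qed

definition irrep_coeff :: "'x \<Rightarrow> nat \<Rightarrow> 'g \<Rightarrow> nat \<Rightarrow> nat \<Rightarrow> complex" where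
  "irrep_coeff \<xi> \<alpha> g i j = hs_inner (E \<xi> \<alpha> i) (conj_act rep g (E \<xi> \<alpha> j))"

lemma conj_act_E_expansion:
  assumes "\<xi> \<in> Xi" "\<alpha> < m \<xi>" "j < d \<xi>" "g \<in> carrier G"
  shows "conj_act rep g (E \<xi> \<alpha> j) = lincomb_m n {..<d \<xi>} (\<lambda>i. irrep_coeff \<xi> \<alpha> g i j) (E \<xi> \<alpha>)"
  unfolding irrep_coeff_def using assms by (intro block_expansion conj_act_block E_in_block)

text \<open>All copies of a type carry the same matrix coefficients, because the
  \<open>\<phi>\<^sup>\<xi>\<^sub>1\<^sub>\<alpha>\<close> are equivariant isometries mapping basis to basis.\<close>
lemma irrep_coeff_copy:
  assumes "\<xi> \<in> Xi" "\<alpha> < m \<xi>" "i < d \<xi>" "j < d \<xi>" "g \<in> carrier G"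
  shows "irrep_coeff \<xi> \<alpha> g i j = irrep_coeff \<xi> 0 g i j"
proof -
  have m0: "0 < m \<xi>"
    using multiplicity_pos assms by auto
  obtain \<phi> where \<phi>: "equiv_iso G rep (block \<xi> 0) (block \<xi> \<alpha>) \<phi>" "isometric_on (block \<xi> 0) \<phi>"
     "\<forall>i<d \<xi>. \<phi> (E \<xi> 0 i) = E \<xi> \<alpha> i"
    using decomposition assms unfolding isotypic_decomposition_def by meson
  have Ei: "E \<xi> 0 i \<in> block \<xi> 0" and Ej: "E \<xi> 0 j \<in> block \<xi> 0"
    using E_in_block m0 assms by auto
  have "irrep_coeff \<xi> \<alpha> g i j = hs_inner (\<phi> (E \<xi> 0 i)) (conj_act rep g (\<phi> (E \<xi> 0 j)))"
    unfolding irrep_coeff_def using \<phi>(3) assms by simp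
  also have "\<dots> = hs_inner (\<phi> (E \<xi> 0 i)) (\<phi> (conj_act rep g (E \<xi> 0 j)))"
    using \<phi>(1) Ej assms(5) unfolding equiv_iso_def by simp
  also have "\<dots> = irrep_coeff \<xi> 0 g i j"
    using \<phi>(2) Ei conj_act_block[OF assms(1) m0 assms(5) Ej] unfolding isometric_on_def irrep_coeff_def by simp
  finally show ?thesis .
qed

lemma irrep_coeff_unitary:
  assumes "\<xi> \<in> Xi" "\<alpha> < m \<xi>" "i < d \<xi>" "j < d \<xi>" "g \<in> carrier G"
  shows "(\<Sum>k<d \<xi>. cnj (irrep_coeff \<xi> \<alpha> g k i) * irrep_coeff \<xi> \<alpha> g k j) = (if i = j then 1 else 0)"
proof -
  have "(\<Sum>k<d \<xi>. cnj (irrep_coeff \<xi> \<alpha> g k i) * irrep_coeff \<xi> \<alpha> g k j)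
      = hs_inner (conj_act rep g (E \<xi> \<alpha> i)) (conj_act rep g (E \<xi> \<alpha> j))"
    using assms by (simp add: conj_act_E_expansion hs_inner_lincomb_m_lincomb_m_orthonormal[OF orthonormal_copy])
  also have "\<dots> = (if i = j then 1 else 0)"
    using assms by (simp add: hs_inner_conj_act hs_inner_E_E)
  finally show ?thesis .
qed

lemma irrep_coeff_inv:
  assumes "\<xi> \<in> Xi" "\<alpha> < m \<xi>" "i < d \<xi>" "k < d \<xi>" "g \<in> carrier G"
  shows "irrep_coeff \<xi> \<alpha> (inv\<^bsub>G\<^esub> g) k i = cnj (irrep_coeff \<xi> \<alpha> g i k)"
proof -
  have "irrep_coeff \<xi> \<alpha> (inv\<^bsub>G\<^esub> g) k i = hs_inner (conj_act rep g (E \<xi> \<alpha> k)) (E \<xi> \<alpha> i)"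
    unfolding irrep_coeff_def using assms group_G
    by (simp add: hs_inner_conj_act_right group.inv_inv)
  also have "\<dots> = cnj (irrep_coeff \<xi> \<alpha> g i k)"
    unfolding irrep_coeff_def using assms by (subst hs_inner_swap[of _ n]) auto
  finally show ?thesis .
qed

abbreviation twirl :: "'x \<Rightarrow> nat \<Rightarrow> nat \<Rightarrow> complex mat \<Rightarrow> complex mat" where
  "twirl \<rho> \<mu> \<nu> \<equiv> Twirl_unit n d E \<rho> \<mu> \<nu>"

lemma twirl_lincomb_m:
  assumes "\<rho> \<in> Xi" "\<mu> < m \<rho>" "\<nu> < m \<rho>" "finite I" "\<And>i. i \<in> I \<Longrightarrow> F i \<in> carrier_mat n n"
  shows "twirl \<rho> \<mu> \<nu> (lincomb_m n I c F) = lincomb_m n I c (\<lambda>i. twirl \<rho> \<mu> \<nu> (F i))"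
proof -
  have "twirl \<rho> \<mu> \<nu> (lincomb_m n I c F) = lincomb_m n {..<d \<rho>} (\<lambda>k. 1)
      (\<lambda>k. lincomb_m n I c (\<lambda>i. adj (E \<rho> \<mu> k) * F i * E \<rho> \<nu> k))"
    unfolding Twirl_unit_def using assms
    by (intro lincomb_m_cong refl) (simp add: mult_lincomb_m_left mult_lincomb_m_right del: mult_assoc_square)
  also have "\<dots> = lincomb_m n I c (\<lambda>i. twirl \<rho> \<mu> \<nu> (F i))"
    unfolding Twirl_unit_def using assms by (intro lincomb_m_swap) auto
  finally show ?thesis .
qed

lemma irrep_coeff_unitary_rows:
  assumes "\<xi> \<in> Xi" "k < d \<xi>" "l < d \<xi>" "h \<in> carrier G"
  shows "(\<Sum>i<d \<xi>. cnj (irrep_coeff \<xi> 0 h k i) * irrep_coeff \<xi> 0 h l i) = (if k = l then 1 else 0)"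
proof -
  let ?R = "irrep_coeff \<xi> 0 (inv\<^bsub>G\<^esub> h)"
  have m0: "0 < m \<xi>"
    using multiplicity_pos assms(1) by auto
  have "irrep_coeff \<xi> 0 h k i = cnj (?R i k)" if "k < d \<xi>" "i < d \<xi>" for k i
    using irrep_coeff_inv[OF assms(1) m0 that(2,1) inv_closed[OF assms(4)]] assms(4) group_G
    by (simp add: group.inv_inv)
  hence "(\<Sum>i<d \<xi>. cnj (irrep_coeff \<xi> 0 h k i) * irrep_coeff \<xi> 0 h l i)
      = cnj (\<Sum>i<d \<xi>. cnj (?R i k) * ?R i l)"
    using assms(2,3) by simp
  also have "\<dots> = (if k = l then 1 else 0)"
    using irrep_coeff_unitary[OF assms(1) m0 assms(2,3) inv_closed[OF assms(4)]] by simp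
  finally show ?thesis .
qed

text \<open>The twirl does not depend on the orthonormal basis chosen inside the blocks:
  rotating both copies by the same unitary \<open>irrep_coeff \<rho> 0 h\<close> leaves it unchanged.\<close>
lemma twirl_rotated_basis:
  assumes r: "\<rho> \<in> Xi" "\<mu> < m \<rho>" "\<nu> < m \<rho>" and h: "h \<in> carrier G" and X: "X \<in> carrier_mat n n"
  shows "twirl \<rho> \<mu> \<nu> X = lincomb_m n {..<d \<rho>} (\<lambda>i. 1)
    (\<lambda>i. adj (conj_act rep h (E \<rho> \<mu> i)) * X * conj_act rep h (E \<rho> \<nu> i))"
proof -
  let ?K = "{..<d \<rho>}"
  define Q where "Q k i = irrep_coeff \<rho> 0 h k i" for k i
  have rotate: "conj_act rep h (E \<rho> \<alpha> i) = lincomb_m n ?K (\<lambda>k. Q k i) (E \<rho> \<alpha>)"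
    if "\<alpha> < m \<rho>" "i < d \<rho>" for \<alpha> i
    using conj_act_E_expansion[OF r(1) that h] irrep_coeff_copy[OF r(1) that(1) _ that(2) h]
    unfolding Q_def by (auto intro!: lincomb_m_cong)
  have "lincomb_m n ?K (\<lambda>i. 1) (\<lambda>i. adj (conj_act rep h (E \<rho> \<mu> i)) * X * conj_act rep h (E \<rho> \<nu> i))
      = lincomb_m n ?K (\<lambda>i. 1) (\<lambda>i. lincomb_m n ?K (\<lambda>k. cnj (Q k i))
          (\<lambda>k. lincomb_m n ?K (\<lambda>l. Q l i) (\<lambda>l. adj (E \<rho> \<mu> k) * X * E \<rho> \<nu> l)))"
  proof (intro lincomb_m_cong refl)
    fix i
    assume "i \<in> ?K"
    hence "conj_act rep h (E \<rho> \<mu> i) = lincomb_m n ?K (\<lambda>k. Q k i) (E \<rho> \<mu>)"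
      "conj_act rep h (E \<rho> \<nu> i) = lincomb_m n ?K (\<lambda>k. Q k i) (E \<rho> \<nu>)"
      using rotate r by auto
    thus "adj (conj_act rep h (E \<rho> \<mu> i)) * X * conj_act rep h (E \<rho> \<nu> i)
        = lincomb_m n ?K (\<lambda>k. cnj (Q k i)) (\<lambda>k. lincomb_m n ?K (\<lambda>l. Q l i) (\<lambda>l. adj (E \<rho> \<mu> k) * X * E \<rho> \<nu> l))"
      using r X by (simp only:) (rule sandwich_lincomb_m, auto)
  qed
  also have "\<dots> = twirl \<rho> \<mu> \<nu> X"
    unfolding Twirl_unit_def Q_def
    by (rule lincomb_m_unitary_frame) (auto simp: irrep_coeff_unitary_rows[OF r(1) _ _ h])
  finally show ?thesis ..
qed

lemma twirl_conj_act:
  assumes r: "\<rho> \<in> Xi" "\<mu> < m \<rho>" "\<nu> < m \<rho>" and g: "g \<in> carrier G" and X: "X \<in> carrier_mat n n"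
  shows "twirl \<rho> \<mu> \<nu> (conj_act rep g X) = conj_act rep g (twirl \<rho> \<mu> \<nu> X)"
proof -
  let ?h = "inv\<^bsub>G\<^esub> g"
  have "adj (E \<rho> \<mu> i) * conj_act rep g X * E \<rho> \<nu> i
      = conj_act rep g (adj (conj_act rep ?h (E \<rho> \<mu> i)) * X * conj_act rep ?h (E \<rho> \<nu> i))"
    if "i < d \<rho>" for i
    unfolding conj_act_def rep_inv[OF g] using g X r that by (simp add: adj_mult[of _ n n _ n])
  hence "twirl \<rho> \<mu> \<nu> (conj_act rep g X) = lincomb_m n {..<d \<rho>} (\<lambda>i. 1)
      (\<lambda>i. conj_act rep g (adj (conj_act rep ?h (E \<rho> \<mu> i)) * X * conj_act rep ?h (E \<rho> \<nu> i)))"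
    unfolding Twirl_unit_def by (intro lincomb_m_cong) auto
  also have "\<dots> = conj_act rep g (lincomb_m n {..<d \<rho>} (\<lambda>i. 1)
      (\<lambda>i. adj (conj_act rep ?h (E \<rho> \<mu> i)) * X * conj_act rep ?h (E \<rho> \<nu> i)))"
    by (rule conj_act_lincomb_m[symmetric]) (use r g X in auto)
  also have "\<dots> = conj_act rep g (twirl \<rho> \<mu> \<nu> X)"
    using twirl_rotated_basis[OF r inv_closed[OF g] X] by simp
  finally show ?thesis .
qed

section \<open>Schur's lemma\<close>

definition block_coords :: "'x \<Rightarrow> complex mat \<Rightarrow> complex vec" where
  "block_coords \<xi> X = vec (d \<xi>) (\<lambda>i. hs_inner (E \<xi> 0 i) X)"

definition coords_block :: "'x \<Rightarrow> complex vec \<Rightarrow> complex mat" where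
  "coords_block \<xi> v = lincomb_m n {..<d \<xi>} (\<lambda>i. v $ i) (E \<xi> 0)"

definition irrep_mat :: "'x \<Rightarrow> 'g \<Rightarrow> complex mat" where
  "irrep_mat \<xi> g = mat (d \<xi>) (d \<xi>) (\<lambda>(i,j). irrep_coeff \<xi> 0 g i j)"

lemma block_coords_carrier [simp]: "block_coords \<xi> X \<in> carrier_vec (d \<xi>)"
  by (simp add: block_coords_def)

lemma irrep_mat_carrier [simp]: "irrep_mat \<xi> g \<in> carrier_mat (d \<xi>) (d \<xi>)"
  by (simp add: irrep_mat_def)

lemma dim_irrep_mat [simp]: "dim_row (irrep_mat \<xi> g) = d \<xi>" "dim_col (irrep_mat \<xi> g) = d \<xi>"
  by (simp_all add: irrep_mat_def)

lemma coords_block_in_block: "coords_block \<xi> v \<in> block \<xi> 0"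
  unfolding coords_block_def irrep_block_def span_m_def by blast

lemma block_coords_coords_block:
  assumes "\<xi> \<in> Xi" "v \<in> carrier_vec (d \<xi>)"
  shows "block_coords \<xi> (coords_block \<xi> v) = v"
  using assms multiplicity_pos[OF assms(1)] unfolding block_coords_def coords_block_def
  by (intro eq_vecI) (auto simp: hs_inner_lincomb_m_orthonormal[OF orthonormal_copy])

lemma coords_block_block_coords:
  assumes "\<xi> \<in> Xi" "X \<in> block \<xi> 0"
  shows "coords_block \<xi> (block_coords \<xi> X) = X"
proof -
  have "X = lincomb_m n {..<d \<xi>} (\<lambda>i. hs_inner (E \<xi> 0 i) X) (E \<xi> 0)"
    using block_expansion[OF assms(1) multiplicity_pos[OF assms(1)] assms(2)] .
  also have "\<dots> = coords_block \<xi> (block_coords \<xi> X)"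
    unfolding coords_block_def block_coords_def by (intro lincomb_m_cong) auto
  finally show ?thesis
    by simp
qed

lemma coords_block_add:
  "v \<in> carrier_vec (d \<xi>) \<Longrightarrow> w \<in> carrier_vec (d \<xi>) \<Longrightarrow> coords_block \<xi> (v + w) = coords_block \<xi> v + coords_block \<xi> w"
  unfolding coords_block_def add_lincomb_m by (intro lincomb_m_cong) auto

lemma coords_block_smult:
  "v \<in> carrier_vec (d \<xi>) \<Longrightarrow> coords_block \<xi> (a \<cdot>\<^sub>v v) = a \<cdot>\<^sub>m coords_block \<xi> v"
  unfolding coords_block_def smult_lincomb_m by (intro lincomb_m_cong) auto

lemma coords_block_zero: "coords_block \<xi> (0\<^sub>v (d \<xi>)) = 0\<^sub>m n n"
proof -
  have "coords_block \<xi> (0\<^sub>v (d \<xi>)) = lincomb_m n {..<d \<xi>} (\<lambda>i. 0) (E \<xi> 0)"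
    unfolding coords_block_def by (intro lincomb_m_cong) auto
  thus ?thesis
    by (simp add: lincomb_m_zero)
qed

lemma conj_act_coords_block:
  assumes "\<xi> \<in> Xi" "g \<in> carrier G" "v \<in> carrier_vec (d \<xi>)"
  shows "conj_act rep g (coords_block \<xi> v) = coords_block \<xi> (irrep_mat \<xi> g *\<^sub>v v)"
proof -
  have m0: "0 < m \<xi>"
    using multiplicity_pos assms by auto
  have "conj_act rep g (coords_block \<xi> v) = lincomb_m n {..<d \<xi>} (\<lambda>j. v $ j) (\<lambda>j. conj_act rep g (E \<xi> 0 j))"
    unfolding coords_block_def by (rule conj_act_lincomb_m) (use assms m0 in auto)
  also have "\<dots> = lincomb_m n {..<d \<xi>} (\<lambda>j. v $ j)
      (\<lambda>j. lincomb_m n {..<d \<xi>} (\<lambda>i. irrep_coeff \<xi> 0 g i j) (E \<xi> 0))"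
    by (intro lincomb_m_cong refl conj_act_E_expansion) (use assms m0 in auto)
  also have "\<dots> = lincomb_m n {..<d \<xi>} (\<lambda>i. \<Sum>j<d \<xi>. v $ j * irrep_coeff \<xi> 0 g i j) (E \<xi> 0)"
    by (rule lincomb_m_lincomb_m) auto
  also have "\<dots> = coords_block \<xi> (irrep_mat \<xi> g *\<^sub>v v)"
    unfolding coords_block_def irrep_mat_def using assms
    by (intro lincomb_m_cong refl) (auto simp: scalar_prod_def atLeast0LessThan mult.commute intro!: sum.cong)
  finally show ?thesis .
qed

lemma block_coords_conj_act:
  assumes "\<xi> \<in> Xi" "g \<in> carrier G" "X \<in> block \<xi> 0"
  shows "block_coords \<xi> (conj_act rep g X) = irrep_mat \<xi> g *\<^sub>v block_coords \<xi> X"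
  using conj_act_coords_block[OF assms(1,2) block_coords_carrier, of X]
    block_coords_coords_block[OF assms(1) mult_mat_vec_carrier[OF irrep_mat_carrier block_coords_carrier]]
  by (simp add: coords_block_block_coords[OF assms(1,3)])

definition invariant_coords :: "'x \<Rightarrow> complex vec set \<Rightarrow> bool" where
  "invariant_coords \<xi> U \<longleftrightarrow> U \<subseteq> carrier_vec (d \<xi>) \<and> 0\<^sub>v (d \<xi>) \<in> U \<and>
     (\<forall>v\<in>U. \<forall>w\<in>U. v + w \<in> U) \<and> (\<forall>a. \<forall>v\<in>U. a \<cdot>\<^sub>v v \<in> U) \<and>
     (\<forall>g\<in>carrier G. \<forall>v\<in>U. irrep_mat \<xi> g *\<^sub>v v \<in> U)"

lemma invariant_coords_block:
  assumes xi: "\<xi> \<in> Xi" and U: "invariant_coords \<xi> U"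
  shows "msubspace n (coords_block \<xi> ` U) \<and> invariant_sub G rep (coords_block \<xi> ` U)"
  unfolding msubspace_def invariant_sub_def
proof (intro conjI ballI allI)
  have U_carrier: "U \<subseteq> carrier_vec (d \<xi>)"
    using U unfolding invariant_coords_def by blast
  show "coords_block \<xi> ` U \<subseteq> carrier_mat n n"
    by (auto simp: coords_block_def)
  show "0\<^sub>m n n \<in> coords_block \<xi> ` U"
    using U coords_block_zero[of \<xi>] unfolding invariant_coords_def by (intro image_eqI) auto
  fix X
  assume "X \<in> coords_block \<xi> ` U"
  then obtain v where v: "v \<in> U" "X = coords_block \<xi> v"
    by blast
  {
    fix Y
    assume "Y \<in> coords_block \<xi> ` U"
    then obtain w where w: "w \<in> U" "Y = coords_block \<xi> w"
      by blast
    have "X + Y = coords_block \<xi> (v + w)"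
      using v w U_carrier by (simp add: coords_block_add subsetD)
    thus "X + Y \<in> coords_block \<xi> ` U"
      using U v w unfolding invariant_coords_def by blast
  }
  show "a \<cdot>\<^sub>m X \<in> coords_block \<xi> ` U" for a
  proof -
    have "a \<cdot>\<^sub>m X = coords_block \<xi> (a \<cdot>\<^sub>v v)"
      using v U_carrier by (simp add: coords_block_smult subsetD)
    thus ?thesis
      using U v unfolding invariant_coords_def by blast
  qed
  show "conj_act rep g X \<in> coords_block \<xi> ` U" if "g \<in> carrier G" for g
  proof -
    have "conj_act rep g X = coords_block \<xi> (irrep_mat \<xi> g *\<^sub>v v)"
      using v U_carrier conj_act_coords_block[OF xi that] by blast
    thus ?thesis
      using U v that unfolding invariant_coords_def by blast
  qed
qed

lemma invariant_coords_trivial: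
  assumes xi: "\<xi> \<in> Xi" and U: "invariant_coords \<xi> U"
  shows "U = {0\<^sub>v (d \<xi>)} \<or> U = carrier_vec (d \<xi>)"
proof -
  have U_carrier: "U \<subseteq> carrier_vec (d \<xi>)" and U_zero: "0\<^sub>v (d \<xi>) \<in> U"
    using U unfolding invariant_coords_def by blast+
  have coords_inj: "v = w" if "v \<in> carrier_vec (d \<xi>)" "w \<in> carrier_vec (d \<xi>)" "coords_block \<xi> v = coords_block \<xi> w" for v w
    by (metis block_coords_coords_block[OF xi that(1)] block_coords_coords_block[OF xi that(2)] that(3))
  have "coords_block \<xi> ` U = {0\<^sub>m n n} \<or> coords_block \<xi> ` U = block \<xi> 0"
    using block_irreducible[OF xi multiplicity_pos[OF xi]] invariant_coords_block[OF xi U] coords_block_in_block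
    unfolding irreducible_sub_def by blast
  thus ?thesis
  proof
    assume zero: "coords_block \<xi> ` U = {0\<^sub>m n n}"
    have "v = 0\<^sub>v (d \<xi>)" if "v \<in> U" for v
    proof (rule coords_inj)
      show "coords_block \<xi> v = coords_block \<xi> (0\<^sub>v (d \<xi>))"
        using zero that by (auto simp: coords_block_zero)
    qed (use that U_carrier in auto)
    thus ?thesis
      using U_zero by blast
  next
    assume full: "coords_block \<xi> ` U = block \<xi> 0"
    have "w \<in> U" if "w \<in> carrier_vec (d \<xi>)" for w
    proof -
      obtain v where "v \<in> U" "coords_block \<xi> w = coords_block \<xi> v"
        using full coords_block_in_block[of \<xi> w] by (metis imageE)
      thus ?thesis
        using coords_inj[OF that] U_carrier by blast
    qed
    thus ?thesis
      using U_carrier by blast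
  qed
qed

lemma dim_pos:
  assumes "\<xi> \<in> Xi"
  shows "0 < d \<xi>"
proof (rule ccontr)
  assume "\<not> 0 < d \<xi>"
  hence "lincomb_m n {..<d \<xi>} c F = 0\<^sub>m n n" for c F
    by (intro eq_matI) (auto simp: index_lincomb_m)
  hence "block \<xi> 0 = {0\<^sub>m n n}"
    unfolding irrep_block_def span_m_def by auto
  thus False
    using block_irreducible[OF assms multiplicity_pos[OF assms]] unfolding irreducible_sub_def by blast
qed

definition intertwines :: "'x \<Rightarrow> 'x \<Rightarrow> complex mat \<Rightarrow> bool" where
  "intertwines \<xi> \<eta> F \<longleftrightarrow> F \<in> carrier_mat (d \<eta>) (d \<xi>) \<and>
     (\<forall>g\<in>carrier G. F * irrep_mat \<xi> g = irrep_mat \<eta> g * F)"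

lemma intertwines_kernel:
  assumes "intertwines \<xi> \<eta> F"
  shows "invariant_coords \<xi> {v \<in> carrier_vec (d \<xi>). F *\<^sub>v v = 0\<^sub>v (d \<eta>)}"
  unfolding invariant_coords_def
proof (intro conjI ballI allI)
  have F: "F \<in> carrier_mat (d \<eta>) (d \<xi>)"
    using assms unfolding intertwines_def by blast
  have "F *\<^sub>v 0\<^sub>v (d \<xi>) = 0\<^sub>v (d \<eta>)"
    using F by (intro eq_vecI) auto
  thus "0\<^sub>v (d \<xi>) \<in> {v \<in> carrier_vec (d \<xi>). F *\<^sub>v v = 0\<^sub>v (d \<eta>)}"
    by simp
  fix v
  assume "v \<in> {v \<in> carrier_vec (d \<xi>). F *\<^sub>v v = 0\<^sub>v (d \<eta>)}"
  hence v: "v \<in> carrier_vec (d \<xi>)" "F *\<^sub>v v = 0\<^sub>v (d \<eta>)"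
    by auto
  {
    fix w
    assume "w \<in> {v \<in> carrier_vec (d \<xi>). F *\<^sub>v v = 0\<^sub>v (d \<eta>)}"
    thus "v + w \<in> {v \<in> carrier_vec (d \<xi>). F *\<^sub>v v = 0\<^sub>v (d \<eta>)}"
      using v mult_add_distrib_mat_vec[OF F v(1)] by auto
  }
  show "a \<cdot>\<^sub>v v \<in> {v \<in> carrier_vec (d \<xi>). F *\<^sub>v v = 0\<^sub>v (d \<eta>)}" for a
    using v mult_mat_vec[OF F v(1)] by auto
  show "irrep_mat \<xi> g *\<^sub>v v \<in> {v \<in> carrier_vec (d \<xi>). F *\<^sub>v v = 0\<^sub>v (d \<eta>)}" if "g \<in> carrier G" for g
  proof -
    have "F *\<^sub>v (irrep_mat \<xi> g *\<^sub>v v) = (F * irrep_mat \<xi> g) *\<^sub>v v"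
      using assoc_mult_mat_vec[OF F irrep_mat_carrier v(1)] by simp
    also have "\<dots> = irrep_mat \<eta> g *\<^sub>v (F *\<^sub>v v)"
      using assms that assoc_mult_mat_vec[OF irrep_mat_carrier F v(1)] unfolding intertwines_def by simp
    also have "\<dots> = 0\<^sub>v (d \<eta>)"
      using v by (intro eq_vecI) (auto simp: irrep_mat_def)
    finally show ?thesis
      using mult_mat_vec_carrier[OF irrep_mat_carrier v(1)] by simp
  qed
qed (auto)

lemma intertwines_image:
  assumes "intertwines \<xi> \<eta> F"
  shows "invariant_coords \<eta> ((*\<^sub>v) F ` carrier_vec (d \<xi>))"
  unfolding invariant_coords_def
proof (intro conjI ballI allI)
  have F: "F \<in> carrier_mat (d \<eta>) (d \<xi>)"
    using assms unfolding intertwines_def by blast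
  show "(*\<^sub>v) F ` carrier_vec (d \<xi>) \<subseteq> carrier_vec (d \<eta>)"
    using F by auto
  have "F *\<^sub>v 0\<^sub>v (d \<xi>) = 0\<^sub>v (d \<eta>)"
    using F by (intro eq_vecI) auto
  thus "0\<^sub>v (d \<eta>) \<in> (*\<^sub>v) F ` carrier_vec (d \<xi>)"
    by (intro image_eqI[where x = "0\<^sub>v (d \<xi>)"]) auto
  fix v
  assume "v \<in> (*\<^sub>v) F ` carrier_vec (d \<xi>)"
  then obtain x where x: "x \<in> carrier_vec (d \<xi>)" "v = F *\<^sub>v x"
    by blast
  {
    fix w
    assume "w \<in> (*\<^sub>v) F ` carrier_vec (d \<xi>)"
    then obtain y where y: "y \<in> carrier_vec (d \<xi>)" "w = F *\<^sub>v y"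
      by blast
    show "v + w \<in> (*\<^sub>v) F ` carrier_vec (d \<xi>)"
      proof
      show "v + w = F *\<^sub>v (x + y)"
        using x y mult_add_distrib_mat_vec[OF F x(1) y(1)] by simp
    qed (use x y in auto)
  }
  show "a \<cdot>\<^sub>v v \<in> (*\<^sub>v) F ` carrier_vec (d \<xi>)" for a
  proof
    show "a \<cdot>\<^sub>v v = F *\<^sub>v (a \<cdot>\<^sub>v x)"
      using x mult_mat_vec[OF F x(1)] by simp
  qed (use x in auto)
  show "irrep_mat \<eta> g *\<^sub>v v \<in> (*\<^sub>v) F ` carrier_vec (d \<xi>)" if "g \<in> carrier G" for g
  proof -
    have "irrep_mat \<eta> g *\<^sub>v v = (irrep_mat \<eta> g * F) *\<^sub>v x"
      using assoc_mult_mat_vec[OF irrep_mat_carrier F x(1)] x(2) by simp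
    also have "\<dots> = (F * irrep_mat \<xi> g) *\<^sub>v x"
      using assms that unfolding intertwines_def by simp
    also have "\<dots> = F *\<^sub>v (irrep_mat \<xi> g *\<^sub>v x)"
      using assoc_mult_mat_vec[OF F irrep_mat_carrier x(1)] .
    finally have "irrep_mat \<eta> g *\<^sub>v v = F *\<^sub>v (irrep_mat \<xi> g *\<^sub>v x)" .
    thus ?thesis
      using mult_mat_vec_carrier[OF irrep_mat_carrier x(1)] by blast
  qed
qed

lemma block_coords_add:
  assumes "\<xi> \<in> Xi" "X \<in> block \<xi> 0" "Y \<in> block \<xi> 0"
  shows "block_coords \<xi> (X + Y) = block_coords \<xi> X + block_coords \<xi> Y"
proof -
  have "X + Y = coords_block \<xi> (block_coords \<xi> X + block_coords \<xi> Y)"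
    using assms by (simp add: coords_block_add coords_block_block_coords)
  thus ?thesis
    using assms(1) by (simp add: block_coords_coords_block)
qed

lemma block_coords_smult:
  assumes "\<xi> \<in> Xi" "X \<in> block \<xi> 0"
  shows "block_coords \<xi> (a \<cdot>\<^sub>m X) = a \<cdot>\<^sub>v block_coords \<xi> X"
proof -
  have "a \<cdot>\<^sub>m X = coords_block \<xi> (a \<cdot>\<^sub>v block_coords \<xi> X)"
    using assms by (simp add: coords_block_smult coords_block_block_coords)
  thus ?thesis
    using assms(1) by (simp add: block_coords_coords_block)
qed

lemma bij_betw_block_coords:
  assumes "\<xi> \<in> Xi"
  shows "bij_betw (block_coords \<xi>) (block \<xi> 0) (carrier_vec (d \<xi>))"
  using assms coords_block_in_block
  by (intro bij_betw_byWitness[where f' = "coords_block \<xi>"])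
    (auto simp: coords_block_block_coords block_coords_coords_block)

lemma bij_betw_coords_block:
  assumes "\<xi> \<in> Xi"
  shows "bij_betw (coords_block \<xi>) (carrier_vec (d \<xi>)) (block \<xi> 0)"
  using assms coords_block_in_block
  by (intro bij_betw_byWitness[where f' = "block_coords \<xi>"])
    (auto simp: coords_block_block_coords block_coords_coords_block)

lemma equiv_iso_of_bijective_intertwiner:
  assumes xi: "\<xi> \<in> Xi" and eta: "\<eta> \<in> Xi" and F: "intertwines \<xi> \<eta> F"
    and bij: "bij_betw ((*\<^sub>v) F) (carrier_vec (d \<xi>)) (carrier_vec (d \<eta>))"
  shows "equiv_iso G rep (block \<xi> 0) (block \<eta> 0) (\<lambda>X. coords_block \<eta> (F *\<^sub>v block_coords \<xi> X))"
    (is "equiv_iso G rep _ _ ?f")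
  unfolding equiv_iso_def
proof (intro conjI ballI allI)
  have Fc: "F \<in> carrier_mat (d \<eta>) (d \<xi>)"
    using F unfolding intertwines_def by blast
  show "bij_betw ?f (block \<xi> 0) (block \<eta> 0)"
    using bij_betw_trans[OF bij_betw_trans[OF bij_betw_block_coords[OF xi] bij] bij_betw_coords_block[OF eta]]
    by (simp add: comp_def)
  fix X
  assume X: "X \<in> block \<xi> 0"
  show "?f (X + Y) = ?f X + ?f Y" if Y: "Y \<in> block \<xi> 0" for Y
    using block_coords_add[OF xi X Y] mult_add_distrib_mat_vec[OF Fc block_coords_carrier block_coords_carrier]
      coords_block_add Fc by simp
  show "?f (a \<cdot>\<^sub>m X) = a \<cdot>\<^sub>m ?f X" for a
    using block_coords_smult[OF xi X] mult_mat_vec[OF Fc block_coords_carrier] coords_block_smult Fc by simp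
  show "?f (conj_act rep g X) = conj_act rep g (?f X)" if g: "g \<in> carrier G" for g
  proof -
    have "F *\<^sub>v (irrep_mat \<xi> g *\<^sub>v block_coords \<xi> X) = irrep_mat \<eta> g *\<^sub>v (F *\<^sub>v block_coords \<xi> X)"
      using F g assoc_mult_mat_vec[OF Fc irrep_mat_carrier block_coords_carrier]
        assoc_mult_mat_vec[OF irrep_mat_carrier Fc block_coords_carrier]
      unfolding intertwines_def by metis
    thus ?thesis
      using block_coords_conj_act[OF xi g X] conj_act_coords_block[OF eta g] Fc by simp
  qed
qed

lemma intertwines_distinct_zero:
  assumes xi: "\<xi> \<in> Xi" and eta: "\<eta> \<in> Xi" and ne: "\<xi> \<noteq> \<eta>" and F: "intertwines \<xi> \<eta> F"
  shows "F = 0\<^sub>m (d \<eta>) (d \<xi>)"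
proof (rule ccontr)
  assume nonzero: "F \<noteq> 0\<^sub>m (d \<eta>) (d \<xi>)"
  have Fc: "F \<in> carrier_mat (d \<eta>) (d \<xi>)"
    using F unfolding intertwines_def by blast
  let ?ker = "{v \<in> carrier_vec (d \<xi>). F *\<^sub>v v = 0\<^sub>v (d \<eta>)}"
  have "?ker \<noteq> carrier_vec (d \<xi>)"
    using nonzero zero_mat_if_mult_mat_vec_zero[OF Fc] by blast
  hence ker: "?ker = {0\<^sub>v (d \<xi>)}"
    using invariant_coords_trivial[OF xi intertwines_kernel[OF F]] by blast
  have "inj_on ((*\<^sub>v) F) (carrier_vec (d \<xi>))"
  proof
    fix a b
    assume ab: "a \<in> carrier_vec (d \<xi>)" "b \<in> carrier_vec (d \<xi>)" "F *\<^sub>v a = F *\<^sub>v b"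
    hence "F *\<^sub>v (a - b) = 0\<^sub>v (d \<eta>)"
      using Fc by (simp add: mult_minus_distrib_mat_vec)
    hence "a - b \<in> ?ker"
      using ab by simp
    hence diff: "a - b = 0\<^sub>v (d \<xi>)"
      unfolding ker by simp
    show "a = b"
    proof (rule eq_vecI)
      fix i
      assume "i < dim_vec b"
      moreover have "(a - b) $ i = 0"
        using diff ab \<open>i < dim_vec b\<close> by simp
      ultimately show "a $ i = b $ i"
        using ab by simp
    qed (use ab in auto)
  qed
  moreover have "(*\<^sub>v) F ` carrier_vec (d \<xi>) = carrier_vec (d \<eta>)"
  proof -
    have "(*\<^sub>v) F ` carrier_vec (d \<xi>) \<noteq> {0\<^sub>v (d \<eta>)}"
      using nonzero zero_mat_if_mult_mat_vec_zero[OF Fc] by blast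
    thus ?thesis
      using invariant_coords_trivial[OF eta intertwines_image[OF F]] by blast
  qed
  ultimately have "bij_betw ((*\<^sub>v) F) (carrier_vec (d \<xi>)) (carrier_vec (d \<eta>))"
    unfolding bij_betw_def ..
  thus False
    using equiv_iso_of_bijective_intertwiner[OF xi eta F] decomposition xi eta ne
    unfolding isotypic_decomposition_def by blast
qed

lemma intertwines_minus_scalar:
  assumes F: "intertwines \<xi> \<xi> F"
  shows "intertwines \<xi> \<xi> (F - lam \<cdot>\<^sub>m 1\<^sub>m (d \<xi>))"
  unfolding intertwines_def
proof (intro conjI ballI)
  have Fc: "F \<in> carrier_mat (d \<xi>) (d \<xi>)"
    using F unfolding intertwines_def by blast
  show "F - lam \<cdot>\<^sub>m 1\<^sub>m (d \<xi>) \<in> carrier_mat (d \<xi>) (d \<xi>)"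
    by (rule minus_carrier_mat) simp
  fix g
  assume "g \<in> carrier G"
  hence comm: "F * irrep_mat \<xi> g = irrep_mat \<xi> g * F"
    using F unfolding intertwines_def by blast
  have "(F - lam \<cdot>\<^sub>m 1\<^sub>m (d \<xi>)) * irrep_mat \<xi> g = F * irrep_mat \<xi> g - lam \<cdot>\<^sub>m irrep_mat \<xi> g"
    by (simp add: minus_mult_distrib_mat[OF Fc _ irrep_mat_carrier]
        mult_smult_assoc_mat[OF one_carrier_mat irrep_mat_carrier] left_mult_one_mat[OF irrep_mat_carrier])
  also have "\<dots> = irrep_mat \<xi> g * (F - lam \<cdot>\<^sub>m 1\<^sub>m (d \<xi>))"
    unfolding comm
    by (simp add: mult_minus_distrib_mat[OF irrep_mat_carrier Fc]
        mult_smult_distrib[OF irrep_mat_carrier one_carrier_mat] right_mult_one_mat[OF irrep_mat_carrier])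
  finally show "(F - lam \<cdot>\<^sub>m 1\<^sub>m (d \<xi>)) * irrep_mat \<xi> g = irrep_mat \<xi> g * (F - lam \<cdot>\<^sub>m 1\<^sub>m (d \<xi>))" .
qed

text \<open>The eigenspace of an eigenvalue \<open>lam\<close> (which exists over \<open>\<complex>\<close>) is invariant, hence everything.\<close>
lemma intertwines_self_scalar:
  assumes xi: "\<xi> \<in> Xi" and F: "intertwines \<xi> \<xi> F"
  shows "\<exists>lam. F = lam \<cdot>\<^sub>m 1\<^sub>m (d \<xi>)"
proof -
  have Fc: "F \<in> carrier_mat (d \<xi>) (d \<xi>)"
    using F unfolding intertwines_def by blast
  obtain lam where "lam \<in> spectrum F"
    using spectrum_non_empty[OF Fc dim_pos[OF xi]] by auto
  then obtain v0 where v0: "v0 \<in> carrier_vec (d \<xi>)" "v0 \<noteq> 0\<^sub>v (d \<xi>)" "F *\<^sub>v v0 = lam \<cdot>\<^sub>v v0"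
    unfolding spectrum_def eigenvalue_def eigenvector_def using Fc by auto
  define D where "D = F - lam \<cdot>\<^sub>m 1\<^sub>m (d \<xi>)"
  have "D *\<^sub>v v0 = lam \<cdot>\<^sub>v v0 - lam \<cdot>\<^sub>v v0"
    unfolding D_def using v0
    by (simp add: minus_mult_distrib_mat_vec[OF Fc _ v0(1)] smult_mult_mat_vec[OF one_carrier_mat v0(1)])
  hence "D *\<^sub>v v0 = 0\<^sub>v (d \<xi>)"
    using v0(1) by (auto intro!: eq_vecI)
  hence "{v \<in> carrier_vec (d \<xi>). D *\<^sub>v v = 0\<^sub>v (d \<xi>)} = carrier_vec (d \<xi>)"
    using invariant_coords_trivial[OF xi intertwines_kernel[OF intertwines_minus_scalar[OF F, of lam, folded D_def]]] v0
    by blast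
  moreover have "D \<in> carrier_mat (d \<xi>) (d \<xi>)"
    unfolding D_def by (rule minus_carrier_mat) simp
  ultimately have D0: "D = 0\<^sub>m (d \<xi>) (d \<xi>)"
    using zero_mat_if_mult_mat_vec_zero by blast
  have "F = lam \<cdot>\<^sub>m 1\<^sub>m (d \<xi>)"
  proof (rule eq_matI)
    fix i j
    assume ij: "i < dim_row (lam \<cdot>\<^sub>m 1\<^sub>m (d \<xi>))" "j < dim_col (lam \<cdot>\<^sub>m 1\<^sub>m (d \<xi>))"
    hence "D $$ (i,j) = 0"
      using D0 by simp
    thus "F $$ (i,j) = (lam \<cdot>\<^sub>m 1\<^sub>m (d \<xi>)) $$ (i,j)"
      unfolding D_def using Fc ij by simp
  qed (use Fc in auto)
  thus ?thesis ..
qed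

section \<open>The MacWilliams identity\<close>

definition twirl_entry :: "'x \<Rightarrow> nat \<Rightarrow> nat \<Rightarrow> 'x \<Rightarrow> nat \<Rightarrow> nat \<Rightarrow> 'x \<Rightarrow> nat \<Rightarrow> nat \<Rightarrow> complex" where
  "twirl_entry \<rho> \<mu> \<nu> \<xi>' \<beta> i' \<xi> \<alpha> i = hs_inner (E \<xi>' \<beta> i') (twirl \<rho> \<mu> \<nu> (E \<xi> \<alpha> i))"

lemma index_irrep_mat:
  assumes "\<xi> \<in> Xi" "\<alpha> < m \<xi>" "i < d \<xi>" "j < d \<xi>" "g \<in> carrier G"
  shows "irrep_mat \<xi> g $$ (i,j) = irrep_coeff \<xi> \<alpha> g i j"
  using assms irrep_coeff_copy[OF assms] by (simp add: irrep_mat_def)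

lemma twirl_entries_intertwine:
  assumes r: "\<rho> \<in> Xi" "\<mu> < m \<rho>" "\<nu> < m \<rho>"
    and xi: "\<xi> \<in> Xi" "\<alpha> < m \<xi>" and xi': "\<xi>' \<in> Xi" "\<beta> < m \<xi>'"
  shows "intertwines \<xi> \<xi>' (mat (d \<xi>') (d \<xi>) (\<lambda>(i',i). twirl_entry \<rho> \<mu> \<nu> \<xi>' \<beta> i' \<xi> \<alpha> i))"
    (is "intertwines _ _ ?T")
  unfolding intertwines_def
proof (intro conjI ballI)
  show "?T \<in> carrier_mat (d \<xi>') (d \<xi>)"
    by simp
  fix g
  assume g: "g \<in> carrier G"
  show "?T * irrep_mat \<xi> g = irrep_mat \<xi>' g * ?T"
  proof (rule eq_matI)
    fix i' j
    assume "i' < dim_row (irrep_mat \<xi>' g * ?T)" "j < dim_col (irrep_mat \<xi>' g * ?T)"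
    hence ij: "i' < d \<xi>'" "j < d \<xi>"
      by auto
    have "(?T * irrep_mat \<xi> g) $$ (i',j)
        = (\<Sum>i<d \<xi>. irrep_coeff \<xi> \<alpha> g i j * hs_inner (E \<xi>' \<beta> i') (twirl \<rho> \<mu> \<nu> (E \<xi> \<alpha> i)))"
      using ij xi g
      by (auto simp: twirl_entry_def scalar_prod_def atLeast0LessThan index_irrep_mat[OF xi(1,2) _ _ g]
          mult.commute intro!: sum.cong)
    also have "\<dots> = hs_inner (E \<xi>' \<beta> i')
        (twirl \<rho> \<mu> \<nu> (lincomb_m n {..<d \<xi>} (\<lambda>i. irrep_coeff \<xi> \<alpha> g i j) (E \<xi> \<alpha>)))"
    proof -
      have "twirl \<rho> \<mu> \<nu> (lincomb_m n {..<d \<xi>} (\<lambda>i. irrep_coeff \<xi> \<alpha> g i j) (E \<xi> \<alpha>))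
          = lincomb_m n {..<d \<xi>} (\<lambda>i. irrep_coeff \<xi> \<alpha> g i j) (\<lambda>i. twirl \<rho> \<mu> \<nu> (E \<xi> \<alpha> i))"
        by (rule twirl_lincomb_m[OF r]) (use xi in auto)
      thus ?thesis
        using xi' ij by (simp add: hs_inner_lincomb_m_right mult.commute)
    qed
    also have "\<dots> = hs_inner (E \<xi>' \<beta> i') (conj_act rep g (twirl \<rho> \<mu> \<nu> (E \<xi> \<alpha> j)))"
      using conj_act_E_expansion[OF xi ij(2) g] twirl_conj_act[OF r g, of "E \<xi> \<alpha> j"] xi ij by simp
    also have "\<dots> = hs_inner (conj_act rep (inv\<^bsub>G\<^esub> g) (E \<xi>' \<beta> i')) (twirl \<rho> \<mu> \<nu> (E \<xi> \<alpha> j))"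
      using hs_inner_conj_act_right g xi' ij by simp
    also have "\<dots> = (\<Sum>k<d \<xi>'. cnj (irrep_coeff \<xi>' \<beta> (inv\<^bsub>G\<^esub> g) k i') * twirl_entry \<rho> \<mu> \<nu> \<xi>' \<beta> k \<xi> \<alpha> j)"
      unfolding conj_act_E_expansion[OF xi' ij(1) inv_closed[OF g]] twirl_entry_def
      by (rule hs_inner_lincomb_m_left) (use xi' in auto)
    also have "\<dots> = (irrep_mat \<xi>' g * ?T) $$ (i',j)"
      using ij xi' g
      by (auto simp: scalar_prod_def atLeast0LessThan index_irrep_mat[OF xi'(1,2) _ _ g] irrep_coeff_inv
          intro!: sum.cong)
    finally show "(?T * irrep_mat \<xi> g) $$ (i',j) = (irrep_mat \<xi>' g * ?T) $$ (i',j)" .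
  qed auto
qed

lemma super_inner_Pi_twirl:
  assumes r: "\<rho> \<in> Xi" "\<mu> < m \<rho>" "\<nu> < m \<rho>" and xi: "\<xi> \<in> Xi" "\<alpha> < m \<xi>" "\<beta> < m \<xi>"
  shows "super_inner n (Pi_unit n d E \<xi> \<alpha> \<beta>) (twirl \<rho> \<mu> \<nu>) = (\<Sum>i<d \<xi>. twirl_entry \<rho> \<mu> \<nu> \<xi> \<beta> i \<xi> \<alpha> i)"
proof -
  let ?U = "\<lambda>q. mat_unit n (fst q) (snd q)"
  have twirl_E: "twirl \<rho> \<mu> \<nu> (E \<xi> \<alpha> i) = lincomb_m n (mat_indices n) (\<lambda>q. E \<xi> \<alpha> i $$ q) (\<lambda>q. twirl \<rho> \<mu> \<nu> (?U q))"
    if "i < d \<xi>" for i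
    using xi that by (subst mat_unit_expansion[of "E \<xi> \<alpha> i" n]) (auto intro!: twirl_lincomb_m[OF r])
  have "super_inner n (Pi_unit n d E \<xi> \<alpha> \<beta>) (twirl \<rho> \<mu> \<nu>)
      = (\<Sum>q\<in>mat_indices n. \<Sum>i<d \<xi>. E \<xi> \<alpha> i $$ q * hs_inner (E \<xi> \<beta> i) (twirl \<rho> \<mu> \<nu> (?U q)))"
  proof -
    have "super_inner n (Pi_unit n d E \<xi> \<alpha> \<beta>) (twirl \<rho> \<mu> \<nu>)
        = (\<Sum>q\<in>mat_indices n. hs_inner (Pi_unit n d E \<xi> \<alpha> \<beta> (?U q)) (twirl \<rho> \<mu> \<nu> (?U q)))"
      unfolding super_inner_def sum.cartesian_product by (simp add: case_prod_beta)
    thus ?thesis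
      using xi by (simp add: hs_inner_Pi_unit_mat_unit)
  qed
  also have "\<dots> = (\<Sum>i<d \<xi>. \<Sum>q\<in>mat_indices n. E \<xi> \<alpha> i $$ q * hs_inner (E \<xi> \<beta> i) (twirl \<rho> \<mu> \<nu> (?U q)))"
    by (rule sum.swap)
  also have "\<dots> = (\<Sum>i<d \<xi>. twirl_entry \<rho> \<mu> \<nu> \<xi> \<beta> i \<xi> \<alpha> i)"
    unfolding twirl_entry_def using xi by (intro sum.cong refl) (simp add: twirl_E hs_inner_lincomb_m_right)
  finally show ?thesis .
qed

text \<open>By Schur's lemma the twirl is diagonal in the basis \<open>E\<close>, and averaging the
  diagonal identifies its eigenvalue with the MacWilliams coefficient.\<close>
lemma twirl_entry_eq_MacW:
  assumes r: "\<rho> \<in> Xi" "\<mu> < m \<rho>" "\<nu> < m \<rho>"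
    and xi: "\<xi> \<in> Xi" "\<alpha> < m \<xi>" "i < d \<xi>" and xi': "\<xi>' \<in> Xi" "\<beta> < m \<xi>'" "i' < d \<xi>'"
  shows "twirl_entry \<rho> \<mu> \<nu> \<xi>' \<beta> i' \<xi> \<alpha> i = (if \<xi>' = \<xi> \<and> i' = i then MacW n d E (\<xi>,\<alpha>,\<beta>) (\<rho>,\<mu>,\<nu>) else 0)"
proof (cases "\<xi>' = \<xi>")
  case False
  have "mat (d \<xi>') (d \<xi>) (\<lambda>(i',i). twirl_entry \<rho> \<mu> \<nu> \<xi>' \<beta> i' \<xi> \<alpha> i) = 0\<^sub>m (d \<xi>') (d \<xi>)"
    using False by (intro intertwines_distinct_zero[OF xi(1) xi'(1)] twirl_entries_intertwine[OF r xi(1,2) xi'(1,2)]) auto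
  thus ?thesis
    using False xi xi' by (auto dest!: arg_cong[where f = "\<lambda>M. M $$ (i',i)"])
next
  case True
  obtain lam where "mat (d \<xi>) (d \<xi>) (\<lambda>(i',i). twirl_entry \<rho> \<mu> \<nu> \<xi> \<beta> i' \<xi> \<alpha> i) = lam \<cdot>\<^sub>m 1\<^sub>m (d \<xi>)"
    using intertwines_self_scalar[OF xi(1) twirl_entries_intertwine[OF r xi(1,2) xi(1)]] xi'(2) True by blast
  hence lam: "twirl_entry \<rho> \<mu> \<nu> \<xi> \<beta> k \<xi> \<alpha> j = (if k = j then lam else 0)" if "k < d \<xi>" "j < d \<xi>" for k j
    using that by (auto dest!: arg_cong[where f = "\<lambda>M. M $$ (k,j)"])
  have "MacW n d E (\<xi>,\<alpha>,\<beta>) (\<rho>,\<mu>,\<nu>) = (1 / of_nat (d \<xi>)) * (\<Sum>j<d \<xi>. lam)"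
    unfolding MacW_def using super_inner_Pi_twirl[OF r xi(1,2) xi'(2)[unfolded True]] by (simp add: lam)
  also have "\<dots> = lam"
    using dim_pos[OF xi(1)] by simp
  finally show ?thesis
    using True lam xi xi' by auto
qed

lemma hs_inner_twirl_expansion:
  assumes r: "\<rho> \<in> Xi" "\<mu> < m \<rho>" "\<nu> < m \<rho>" and X: "X \<in> carrier_mat n n"
  defines "c \<equiv> \<lambda>p. hs_inner (basis p) X"
  shows "hs_inner X (twirl \<rho> \<mu> \<nu> X)
    = (\<Sum>q\<in>idx Xi m d. \<Sum>p\<in>idx Xi m d. c q * cnj (c p) * hs_inner (basis p) (twirl \<rho> \<mu> \<nu> (basis q)))"
proof -
  let ?N = "idx Xi m d"
  have fin: "finite ?N"
    using finite_idx[OF finite_types] .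
  have X_eq: "X = lincomb_m n ?N c basis"
    unfolding c_def by (rule orthonormal_basis_expansion[OF orthonormal_basis X])
  have "twirl \<rho> \<mu> \<nu> X = lincomb_m n ?N c (\<lambda>q. twirl \<rho> \<mu> \<nu> (basis q))"
    by (subst X_eq) (rule twirl_lincomb_m[OF r fin basis_carrier])
  hence "hs_inner X (twirl \<rho> \<mu> \<nu> X) = hs_inner X (lincomb_m n ?N c (\<lambda>q. twirl \<rho> \<mu> \<nu> (basis q)))"
    by simp
  also have "\<dots> = (\<Sum>q\<in>?N. c q * hs_inner X (twirl \<rho> \<mu> \<nu> (basis q)))"
    by (rule hs_inner_lincomb_m_right) (use X fin in auto)
  also have "\<dots> = (\<Sum>q\<in>?N. \<Sum>p\<in>?N. c q * cnj (c p) * hs_inner (basis p) (twirl \<rho> \<mu> \<nu> (basis q)))"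
  proof (intro sum.cong refl)
    fix q
    have "hs_inner X (twirl \<rho> \<mu> \<nu> (basis q)) = (\<Sum>p\<in>?N. cnj (c p) * hs_inner (basis p) (twirl \<rho> \<mu> \<nu> (basis q)))"
      by (subst X_eq, rule hs_inner_lincomb_m_left) (use fin basis_carrier in auto)
    thus "c q * hs_inner X (twirl \<rho> \<mu> \<nu> (basis q))
        = (\<Sum>p\<in>?N. c q * cnj (c p) * hs_inner (basis p) (twirl \<rho> \<mu> \<nu> (basis q)))"
      by (simp add: sum_distrib_left mult_ac)
  qed
  finally show ?thesis .
qed

lemma sum_types_delta:
  assumes "\<xi> \<in> Xi" "i < d \<xi>"
  shows "(\<Sum>\<xi>'\<in>Xi. \<Sum>\<beta><m \<xi>'. \<Sum>i'<d \<xi>'. if \<xi>' = \<xi> \<and> i' = i then f \<xi>' \<beta> i' else 0) = (\<Sum>\<beta><m \<xi>. f \<xi> \<beta> i)"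
proof -
  have "(\<Sum>\<xi>'\<in>Xi. \<Sum>\<beta><m \<xi>'. \<Sum>i'<d \<xi>'. if \<xi>' = \<xi> \<and> i' = i then f \<xi>' \<beta> i' else 0)
      = (\<Sum>\<xi>'\<in>Xi. if \<xi>' = \<xi> then (\<Sum>\<beta><m \<xi>. f \<xi> \<beta> i) else 0)"
    using assms(2) by (intro sum.cong refl) auto
  also have "\<dots> = (\<Sum>\<beta><m \<xi>. f \<xi> \<beta> i)"
    using assms(1) finite_types by simp
  finally show ?thesis .
qed

theorem MacWilliams_identity:
  assumes r: "\<rho> \<in> Xi" "\<mu> < m \<rho>" "\<nu> < m \<rho>" and X: "X \<in> carrier_mat n n"
  shows "B_enum n m d E X \<rho> $$ (\<mu>,\<nu>)
    = (\<Sum>\<xi>\<in>Xi. \<Sum>\<alpha><m \<xi>. \<Sum>\<beta><m \<xi>. MacW n d E (\<xi>,\<alpha>,\<beta>) (\<rho>,\<mu>,\<nu>) * A_enum n m d E X \<xi> $$ (\<alpha>,\<beta>))"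
proof -
  define c where "c p = hs_inner (basis p) X" for p
  have "B_enum n m d E X \<rho> $$ (\<mu>,\<nu>)
      = (\<Sum>\<xi>\<in>Xi. \<Sum>\<alpha><m \<xi>. \<Sum>i<d \<xi>. \<Sum>\<xi>'\<in>Xi. \<Sum>\<beta><m \<xi>'. \<Sum>i'<d \<xi>'.
          c (\<xi>,\<alpha>,i) * cnj (c (\<xi>',\<beta>,i')) * twirl_entry \<rho> \<mu> \<nu> \<xi>' \<beta> i' \<xi> \<alpha> i)"
    using r hs_inner_twirl_expansion[OF r X]
    by (simp add: B_enum_def c_def sum_idx[OF finite_types] twirl_entry_def)
  also have "\<dots> = (\<Sum>\<xi>\<in>Xi. \<Sum>\<alpha><m \<xi>. \<Sum>i<d \<xi>. \<Sum>\<beta><m \<xi>.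
      c (\<xi>,\<alpha>,i) * cnj (c (\<xi>,\<beta>,i)) * MacW n d E (\<xi>,\<alpha>,\<beta>) (\<rho>,\<mu>,\<nu>))"
    using r
    by (intro sum.cong refl)
      (simp add: twirl_entry_eq_MacW if_distrib[where f = "\<lambda>z. _ * z"] sum_types_delta cong: if_cong)
  also have "\<dots> = (\<Sum>\<xi>\<in>Xi. \<Sum>\<alpha><m \<xi>. \<Sum>\<beta><m \<xi>. MacW n d E (\<xi>,\<alpha>,\<beta>) (\<rho>,\<mu>,\<nu>) * A_enum n m d E X \<xi> $$ (\<alpha>,\<beta>))"
  proof (rule sum.cong[OF refl], rule sum.cong[OF refl])
    fix \<xi> \<alpha>
    assume xi: "\<xi> \<in> Xi" and a: "\<alpha> \<in> {..<m \<xi>}"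
    have "(\<Sum>i<d \<xi>. \<Sum>\<beta><m \<xi>. c (\<xi>,\<alpha>,i) * cnj (c (\<xi>,\<beta>,i)) * MacW n d E (\<xi>,\<alpha>,\<beta>) (\<rho>,\<mu>,\<nu>))
        = (\<Sum>\<beta><m \<xi>. \<Sum>i<d \<xi>. c (\<xi>,\<alpha>,i) * cnj (c (\<xi>,\<beta>,i)) * MacW n d E (\<xi>,\<alpha>,\<beta>) (\<rho>,\<mu>,\<nu>))"
      by (rule sum.swap)
    also have "\<dots> = (\<Sum>\<beta><m \<xi>. MacW n d E (\<xi>,\<alpha>,\<beta>) (\<rho>,\<mu>,\<nu>) * A_enum n m d E X \<xi> $$ (\<alpha>,\<beta>))"
      using xi a X by (intro sum.cong refl) (simp add: A_enum_entry c_def sum_distrib_left mult_ac)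
    finally show "(\<Sum>i<d \<xi>. \<Sum>\<beta><m \<xi>. c (\<xi>,\<alpha>,i) * cnj (c (\<xi>,\<beta>,i)) * MacW n d E (\<xi>,\<alpha>,\<beta>) (\<rho>,\<mu>,\<nu>))
        = (\<Sum>\<beta><m \<xi>. MacW n d E (\<xi>,\<alpha>,\<beta>) (\<rho>,\<mu>,\<nu>) * A_enum n m d E X \<xi> $$ (\<alpha>,\<beta>))" .
  qed
  finally show ?thesis .
qed

end

section \<open>Feasibility of the semidefinite system\<close>

locale isotypic_code = isotypic_setting G rep n Xi m d E + code_projector n K c
  for G :: "('g, 'b) monoid_scheme" and rep :: "'g \<Rightarrow> complex mat" and n :: nat
    and Xi :: "'x set" and m d :: "'x \<Rightarrow> nat" and E :: "'x \<Rightarrow> nat \<Rightarrow> nat \<Rightarrow> complex mat"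
    and K :: nat and c :: "nat \<Rightarrow> complex vec"

sublocale isotypic_code \<subseteq> code_enumerators n Xi m d E K c ..

lemma (in isotypic_code) enumerators_feasible:
  assumes "S \<subseteq> Xi" and "\<forall>\<xi>\<in>S. detects P (isotypic_sector n m d E \<xi>)"
  shows "mw_feasible n Xi m d E S K (A_enum n m d E P) (B_enum n m d E P)"
  unfolding mw_feasible_def
proof (intro conjI ballI allI impI)
  fix \<xi>
  assume "\<xi> \<in> Xi"
  thus "hermitian (A_enum n m d E P \<xi>)" "hermitian (B_enum n m d E P \<xi>)"
    "loewner_le (0\<^sub>m (m \<xi>) (m \<xi>)) (A_enum n m d E P \<xi>)"
    "loewner_le (A_enum n m d E P \<xi>) (of_nat K \<cdot>\<^sub>m B_enum n m d E P \<xi>)"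
    by (simp_all add: hermitian_A_enum hermitian_B_enum adj_proj_of A_enum_psd A_enum_le_B_enum)
next
  fix \<rho> \<mu> \<nu>
  assume "\<rho> \<in> Xi" "\<mu> < m \<rho>" "\<nu> < m \<rho>"
  thus "B_enum n m d E P \<rho> $$ (\<mu>,\<nu>) = (\<Sum>\<xi>\<in>Xi. \<Sum>\<alpha><m \<xi>. \<Sum>\<beta><m \<xi>.
      MacW n d E (\<xi>,\<alpha>,\<beta>) (\<rho>,\<mu>,\<nu>) * A_enum n m d E P \<xi> $$ (\<alpha>,\<beta>))"
    by (simp add: MacWilliams_identity)
next
  fix \<xi>
  assume "\<xi> \<in> S"
  thus "A_enum n m d E P \<xi> = of_nat K \<cdot>\<^sub>m B_enum n m d E P \<xi>"
    using assms by (blast intro: A_enum_eq_smult_B_enum_if_detects)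
qed (simp_all add: sum_mtrace_A_enum_proj sum_mtrace_B_enum_proj)

theorem mainTheorem19:
  fixes G :: "('g, 'b) monoid_scheme" and rep :: "'g \<Rightarrow> complex mat" and n :: nat
    and Xi :: "'x set" and m d :: "'x \<Rightarrow> nat" and E :: "'x \<Rightarrow> nat \<Rightarrow> nat \<Rightarrow> complex mat"
    and S :: "'x set" and K :: nat and c :: "nat \<Rightarrow> complex vec"
  assumes "unitary_rep G n rep"
    and "isotypic_decomposition G n rep Xi m d E"
    and "S \<subseteq> Xi"
    and "orthonormal_family n K c"
    and "\<forall>\<xi>\<in>S. detects (proj_of n K c) (isotypic_sector n m d E \<xi>)"
  shows "mw_feasible n Xi m d E S K (A_enum n m d E (proj_of n K c)) (B_enum n m d E (proj_of n K c))
    \<and> (\<exists>A B. mw_feasible n Xi m d E S K A B)"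
proof -
  interpret isotypic_code G rep n Xi m d E K c
    using assms(1,2,4) by unfold_locales
  show ?thesis
    using enumerators_feasible[OF assms(3,5)] by blast
qed

end
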